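(* Let $\mathcal S$ be a $\Rsh$-closed $\diamond\cap$-closed subset of a finite multi-algebra $\mathcal A=\mathcal A_1\times\cdots\times\mathcal A_m$. If for all distinct $i,j\in\{1,\dots,m\}$ every network with only three variables over the bi-slice $\mathcal S_{i,j}$ is dissociable, then $\mathcal S$ is dissociable.
   Context: A finite non-associative algebra is a tuple $(\mathcal A,\cup,\neg,\emptyset,\mathcal B,\diamond,\overline{\cdot},e)$ where $(\mathcal A,\cup,\neg,\emptyset,\mathcal B)$ is a finite Boolean algebra (with $x\cap y=\neg(\neg x\cup\neg y)$) and for all $x,y,z$: $\overline{\overline x}=x$, $\overline{x\cup y}=\overline x\cup\overline y$, $\overline{x\diamond y}=\overline y\diamond\overline x$, $e\diamond x=x\diamond e=x$, $x\diamond(y\cup z)=(x\diamond y)\cup(x\diamond z)$, $(x\diamond y)\cap\overline z=\emptyset\iff(y\diamond z)\cap\overline x=\emptyset$. $r\subseteq r'$ means $r\cup r'=r'$. A projection operator from $\mathcal A$ to $\mathcal A'$ is a map $\Rsh$ with $\Rsh(r\cup r')=\Rsh r\cup\Rsh r'$ and $\Rsh\overline r=\overline{\Rsh r}$. A finite multi-algebra is a product $\mathcal A_1\times\cdots\times\mathcal A_m$ of finite non-associative algebras with projection operators $\Rsh_i^j:\mathcal A_i\to\mathcal A_j$ for all distinct $i,j$; $\subseteq,\diamond,\cap,\overline{\cdot}$ on relations $R=(R_1,\dots,R_m)$ componentwise. $R$ is closed under projection if $R_j\subseteq\Rsh_i^jR_i$ for all distinct $i,j$; the projection closure $\Rsh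 R$ is obtained by repeatedly replacing $R_j$ by $R_j\cap\Rsh_i^jR_i$ until a fixed point. A network over $\mathcal S\subseteq\mathcal A$ is a finite set $E$ of variables with $N^{xy}\in\mathcal S$ for all distinct $x,y\in E$, $N^{yx}=\overline{N^{xy}}$; $N_i^{xy}=(N^{xy})_i$. $N$ is trivially inconsistent if some $N_i^{xy}=\emptyset$; closed under composition if $N^{xz}\subseteq N^{xy}\diamond N^{yz}$ for all distinct $x,y,z$; closed under projection if all $N^{xy}$ are; algebraically consistent if closed under both and not trivially inconsistent. $N$ is dissociable if replacing each $N^{xy}$ by $\Rsh N^{xy}$ and then closing under composition (repeating $N^{xz}\leftarrow N^{xz}\cap(N^{xy}\diamond N^{yz})$ to a fixed point) yields a network that is algebraically consistent or trivially inconsistent; a subset is dissociable if every network over it is. $\mathcal S$ is $\diamond\cap$-closed if $(R\diamond R')\cap R''\in\mathcal S$ for all $R,R',R''\in\mathcal S$, and $\Rsh$-closed if $\Rsh R\in\mathcal S$ for all $R\in\mathcal S$. The bi-slice $\mathcal A_{i,j}$ is the multi-algebra $\mathcal A_i\times\mathcal A_j$ with projections $\Rsh_i^j,\Rsh_j^i$; the bi-slice of $\mathcal S$ is $\mathcal S_{i,j}=\{(R_i,R_j):R\in\mathcal S\}\subseteq\mathcal A_{i,j}$. *)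

theory Defs
  imports Main "HOL-Library.While_Combinator"
begin

record 'a nalg =
  carrier :: "'a set"
  join :: "'a \<Rightarrow> 'a \<Rightarrow> 'a"
  neg :: "'a \<Rightarrow> 'a"
  bot :: 'a
  top :: 'a
  comp :: "'a \<Rightarrow> 'a \<Rightarrow> 'a"
  conv :: "'a \<Rightarrow> 'a"
  ident :: 'a

definition meet :: "('a, 'b) nalg_scheme \<Rightarrow> 'a \<Rightarrow> 'a \<Rightarrow> 'a" where
  "meet A x y = neg A (join A (neg A x) (neg A y))"

definition le :: "('a, 'b) nalg_scheme \<Rightarrow> 'a \<Rightarrow> 'a \<Rightarrow> bool" where
  "le A x y \<longleftrightarrow> join A x y = y"

text \<open>Finite Boolean algebra on the carrier (Huntington's postulates, meet defined by De Morgan).\<close>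
definition finite_boolean_algebra :: "('a, 'b) nalg_scheme \<Rightarrow> bool" where
  "finite_boolean_algebra A \<longleftrightarrow>
     finite (carrier A) \<and> bot A \<in> carrier A \<and> top A \<in> carrier A \<and>
     (\<forall>x\<in>carrier A. \<forall>y\<in>carrier A. join A x y \<in> carrier A) \<and>
     (\<forall>x\<in>carrier A. neg A x \<in> carrier A) \<and>
     (\<forall>x\<in>carrier A. \<forall>y\<in>carrier A. \<forall>z\<in>carrier A.
        join A x y = join A y x \<and> meet A x y = meet A y x \<and>
        join A x (meet A y z) = meet A (join A x y) (join A x z) \<and>
        meet A x (join A y z) = join A (meet A x y) (meet A x z) \<and>
        join A x (bot A) = x \<and> meet A x (top A) = x \<and>
        join A x (neg A x) = top A \<and> meet A x (neg A x) = bot A)"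

definition nalg :: "('a, 'b) nalg_scheme \<Rightarrow> bool" where
  "nalg A \<longleftrightarrow> finite_boolean_algebra A \<and> ident A \<in> carrier A \<and>
     (\<forall>x\<in>carrier A. \<forall>y\<in>carrier A. comp A x y \<in> carrier A) \<and>
     (\<forall>x\<in>carrier A. conv A x \<in> carrier A) \<and>
     (\<forall>x\<in>carrier A. \<forall>y\<in>carrier A. \<forall>z\<in>carrier A.
        conv A (conv A x) = x \<and>
        conv A (join A x y) = join A (conv A x) (conv A y) \<and>
        conv A (comp A x y) = comp A (conv A y) (conv A x) \<and>
        comp A (ident A) x = x \<and> comp A x (ident A) = x \<and>
        comp A x (join A y z) = join A (comp A x y) (comp A x z) \<and>
        (meet A (comp A x y) (conv A z) = bot A \<longleftrightarrow>
         meet A (comp A y z) (conv A x) = bot A))"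

text \<open>A multi-algebra with m components (indexed 0..<m), components A i and
  projection operators P i j : A i \<rightarrow> A j for distinct i, j.
  Relations are lists of length m.\<close>

definition multi_algebra ::
  "nat \<Rightarrow> (nat \<Rightarrow> 'a nalg) \<Rightarrow> (nat \<Rightarrow> nat \<Rightarrow> 'a \<Rightarrow> 'a) \<Rightarrow> bool" where
  "multi_algebra m A P \<longleftrightarrow>
     (\<forall>i<m. nalg (A i)) \<and>
     (\<forall>i<m. \<forall>j<m. i \<noteq> j \<longrightarrow>
        (\<forall>r\<in>carrier (A i). P i j r \<in> carrier (A j) \<and>
           P i j (conv (A i) r) = conv (A j) (P i j r) \<and>
           (\<forall>r'\<in>carrier (A i). P i j (join (A i) r r') = join (A j) (P i j r) (P i j r'))))"

definition is_rel :: "nat \<Rightarrow> (nat \<Rightarrow> 'a nalg) \<Rightarrow> 'a list \<Rightarrow> bool" where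
  "is_rel m A R \<longleftrightarrow> length R = m \<and> (\<forall>i<m. R ! i \<in> carrier (A i))"

definition rcomp :: "nat \<Rightarrow> (nat \<Rightarrow> 'a nalg) \<Rightarrow> 'a list \<Rightarrow> 'a list \<Rightarrow> 'a list" where
  "rcomp m A R R' = map (\<lambda>i. comp (A i) (R ! i) (R' ! i)) [0..<m]"

definition rmeet :: "nat \<Rightarrow> (nat \<Rightarrow> 'a nalg) \<Rightarrow> 'a list \<Rightarrow> 'a list \<Rightarrow> 'a list" where
  "rmeet m A R R' = map (\<lambda>i. meet (A i) (R ! i) (R' ! i)) [0..<m]"

definition rconv :: "nat \<Rightarrow> (nat \<Rightarrow> 'a nalg) \<Rightarrow> 'a list \<Rightarrow> 'a list" where
  "rconv m A R = map (\<lambda>i. conv (A i) (R ! i)) [0..<m]"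

definition rle :: "nat \<Rightarrow> (nat \<Rightarrow> 'a nalg) \<Rightarrow> 'a list \<Rightarrow> 'a list \<Rightarrow> bool" where
  "rle m A R R' \<longleftrightarrow> (\<forall>i<m. le (A i) (R ! i) (R' ! i))"

definition proj_closed ::
  "nat \<Rightarrow> (nat \<Rightarrow> 'a nalg) \<Rightarrow> (nat \<Rightarrow> nat \<Rightarrow> 'a \<Rightarrow> 'a) \<Rightarrow> 'a list \<Rightarrow> bool" where
  "proj_closed m A P R \<longleftrightarrow>
     (\<forall>i<m. \<forall>j<m. i \<noteq> j \<longrightarrow> le (A j) (R ! j) (P i j (R ! i)))"

definition proj_pair_step ::
  "(nat \<Rightarrow> 'a nalg) \<Rightarrow> (nat \<Rightarrow> nat \<Rightarrow> 'a \<Rightarrow> 'a) \<Rightarrow> nat \<times> nat \<Rightarrow> 'a list \<Rightarrow> 'a list" where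
  "proj_pair_step A P ij R =
     (case ij of (i, j) \<Rightarrow> R[j := meet (A j) (R ! j) (P i j (R ! i))])"

definition proj_round ::
  "nat \<Rightarrow> (nat \<Rightarrow> 'a nalg) \<Rightarrow> (nat \<Rightarrow> nat \<Rightarrow> 'a \<Rightarrow> 'a) \<Rightarrow> 'a list \<Rightarrow> 'a list" where
  "proj_round m A P R =
     fold (proj_pair_step A P) [(i, j). i \<leftarrow> [0..<m], j \<leftarrow> [0..<m], i \<noteq> j] R"

definition proj_closure ::
  "nat \<Rightarrow> (nat \<Rightarrow> 'a nalg) \<Rightarrow> (nat \<Rightarrow> nat \<Rightarrow> 'a \<Rightarrow> 'a) \<Rightarrow> 'a list \<Rightarrow> 'a list" where
  "proj_closure m A P R =
     the (while_option (\<lambda>R. proj_round m A P R \<noteq> R) (proj_round m A P) R)"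

definition network_over ::
  "nat \<Rightarrow> (nat \<Rightarrow> 'a nalg) \<Rightarrow> 'a list set \<Rightarrow> nat set \<Rightarrow> (nat \<Rightarrow> nat \<Rightarrow> 'a list) \<Rightarrow> bool" where
  "network_over m A S E N \<longleftrightarrow> finite E \<and>
     (\<forall>x\<in>E. \<forall>y\<in>E. x \<noteq> y \<longrightarrow> N x y \<in> S \<and> N y x = rconv m A (N x y))"

definition triv_inconsistent ::
  "nat \<Rightarrow> (nat \<Rightarrow> 'a nalg) \<Rightarrow> nat set \<Rightarrow> (nat \<Rightarrow> nat \<Rightarrow> 'a list) \<Rightarrow> bool" where
  "triv_inconsistent m A E N \<longleftrightarrow>
     (\<exists>x\<in>E. \<exists>y\<in>E. x \<noteq> y \<and> (\<exists>i<m. N x y ! i = bot (A i)))"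

definition comp_closed ::
  "nat \<Rightarrow> (nat \<Rightarrow> 'a nalg) \<Rightarrow> nat set \<Rightarrow> (nat \<Rightarrow> nat \<Rightarrow> 'a list) \<Rightarrow> bool" where
  "comp_closed m A E N \<longleftrightarrow>
     (\<forall>x\<in>E. \<forall>y\<in>E. \<forall>z\<in>E. x \<noteq> y \<and> y \<noteq> z \<and> x \<noteq> z \<longrightarrow>
        rle m A (N x z) (rcomp m A (N x y) (N y z)))"

definition net_proj_closed ::
  "nat \<Rightarrow> (nat \<Rightarrow> 'a nalg) \<Rightarrow> (nat \<Rightarrow> nat \<Rightarrow> 'a \<Rightarrow> 'a) \<Rightarrow> nat set \<Rightarrow> (nat \<Rightarrow> nat \<Rightarrow> 'a list) \<Rightarrow> bool" where
  "net_proj_closed m A P E N \<longleftrightarrow>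
     (\<forall>x\<in>E. \<forall>y\<in>E. x \<noteq> y \<longrightarrow> proj_closed m A P (N x y))"

definition alg_consistent ::
  "nat \<Rightarrow> (nat \<Rightarrow> 'a nalg) \<Rightarrow> (nat \<Rightarrow> nat \<Rightarrow> 'a \<Rightarrow> 'a) \<Rightarrow> nat set \<Rightarrow> (nat \<Rightarrow> nat \<Rightarrow> 'a list) \<Rightarrow> bool" where
  "alg_consistent m A P E N \<longleftrightarrow>
     comp_closed m A E N \<and> net_proj_closed m A P E N \<and> \<not> triv_inconsistent m A E N"

definition comp_triple_step ::
  "nat \<Rightarrow> (nat \<Rightarrow> 'a nalg) \<Rightarrow> nat \<times> nat \<times> nat \<Rightarrow> (nat \<Rightarrow> nat \<Rightarrow> 'a list) \<Rightarrow> (nat \<Rightarrow> nat \<Rightarrow> 'a list)" where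
  "comp_triple_step m A xyz N =
     (case xyz of (x, y, z) \<Rightarrow>
        (let r = rmeet m A (N x z) (rcomp m A (N x y) (N y z))
         in (\<lambda>a b. if a = x \<and> b = z then r
                    else if a = z \<and> b = x then rconv m A r
                    else N a b)))"

definition comp_round ::
  "nat \<Rightarrow> (nat \<Rightarrow> 'a nalg) \<Rightarrow> nat set \<Rightarrow> (nat \<Rightarrow> nat \<Rightarrow> 'a list) \<Rightarrow> (nat \<Rightarrow> nat \<Rightarrow> 'a list)" where
  "comp_round m A E N =
     fold (comp_triple_step m A)
       [(x, y, z). x \<leftarrow> sorted_list_of_set E, y \<leftarrow> sorted_list_of_set E,
                   z \<leftarrow> sorted_list_of_set E, x \<noteq> y \<and> y \<noteq> z \<and> x \<noteq> z] N"

definition comp_closure ::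
  "nat \<Rightarrow> (nat \<Rightarrow> 'a nalg) \<Rightarrow> nat set \<Rightarrow> (nat \<Rightarrow> nat \<Rightarrow> 'a list) \<Rightarrow> (nat \<Rightarrow> nat \<Rightarrow> 'a list)" where
  "comp_closure m A E N =
     the (while_option (\<lambda>N. comp_round m A E N \<noteq> N) (comp_round m A E) N)"

definition dissociable_net ::
  "nat \<Rightarrow> (nat \<Rightarrow> 'a nalg) \<Rightarrow> (nat \<Rightarrow> nat \<Rightarrow> 'a \<Rightarrow> 'a) \<Rightarrow> nat set \<Rightarrow> (nat \<Rightarrow> nat \<Rightarrow> 'a list) \<Rightarrow> bool" where
  "dissociable_net m A P E N \<longleftrightarrow>
     (let N' = comp_closure m A E (\<lambda>x y. proj_closure m A P (N x y))
      in alg_consistent m A P E N' \<or> triv_inconsistent m A E N')"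

definition dissociable_set ::
  "nat \<Rightarrow> (nat \<Rightarrow> 'a nalg) \<Rightarrow> (nat \<Rightarrow> nat \<Rightarrow> 'a \<Rightarrow> 'a) \<Rightarrow> 'a list set \<Rightarrow> bool" where
  "dissociable_set m A P S \<longleftrightarrow>
     (\<forall>E N. network_over m A S E N \<longrightarrow> dissociable_net m A P E N)"

definition proj_closed_set ::
  "nat \<Rightarrow> (nat \<Rightarrow> 'a nalg) \<Rightarrow> (nat \<Rightarrow> nat \<Rightarrow> 'a \<Rightarrow> 'a) \<Rightarrow> 'a list set \<Rightarrow> bool" where
  "proj_closed_set m A P S \<longleftrightarrow> (\<forall>R\<in>S. proj_closure m A P R \<in> S)"

definition comp_meet_closed_set :: "nat \<Rightarrow> (nat \<Rightarrow> 'a nalg) \<Rightarrow> 'a list set \<Rightarrow> bool" where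
  "comp_meet_closed_set m A S \<longleftrightarrow>
     (\<forall>R\<in>S. \<forall>R'\<in>S. \<forall>R''\<in>S. rmeet m A (rcomp m A R R') R'' \<in> S)"

definition bislice_alg :: "(nat \<Rightarrow> 'a nalg) \<Rightarrow> nat \<Rightarrow> nat \<Rightarrow> (nat \<Rightarrow> 'a nalg)" where
  "bislice_alg A i j = (\<lambda>k. if k = 0 then A i else A j)"

definition bislice_proj ::
  "(nat \<Rightarrow> nat \<Rightarrow> 'a \<Rightarrow> 'a) \<Rightarrow> nat \<Rightarrow> nat \<Rightarrow> (nat \<Rightarrow> nat \<Rightarrow> 'a \<Rightarrow> 'a)" where
  "bislice_proj P i j = (\<lambda>a b. if a = 0 then P i j else P j i)"

definition bislice_set :: "'a list set \<Rightarrow> nat \<Rightarrow> nat \<Rightarrow> 'a list set" where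
  "bislice_set S i j = (\<lambda>R. [R ! i, R ! j]) ` S"

end

theory Submission
  imports Defs
begin

(* Replace every label of N by its projection closure, giving N1, and let N' be the composition
   closure of N1: the greatest composition closed network below N1. Suppose N' is not trivially
   inconsistent. Among the networks over S with projection closed labels lying between N' and N1,
   one of minimal size is composition closed. Otherwise some triangle x y z violates closure, and
   replacing the label of x z by the projection closure of (M x y \<diamond> M y z) \<inter> M x z gives a
   smaller such network. It still lies above N' because composition closure acts componentwise:
   on the bi-slice (i, j) the closure of the triangle {x, y, z} is the closure of a three-variable
   network over the bi-slice of S, which is dissociable by hypothesis, so the closure of the
   triangle is projection closed. The minimal network is then composition closed and below N1,
   hence below N', hence equal to N', which is therefore projection closed. *)

section \<open>Boolean algebras and non-associative algebras on a carrier\<close>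

locale carrier_boolean_algebra =
  fixes B :: "('a, 'b) nalg_scheme"
  assumes finite_boolean_algebra: "finite_boolean_algebra B"
begin

lemma bot_closed [simp]: "bot B \<in> carrier B"
  and top_closed [simp]: "top B \<in> carrier B"
  and finite_carrier: "finite (carrier B)"
  using finite_boolean_algebra unfolding finite_boolean_algebra_def by auto

lemma join_closed [simp]: "x \<in> carrier B \<Longrightarrow> y \<in> carrier B \<Longrightarrow> join B x y \<in> carrier B"
  and neg_closed [simp]: "x \<in> carrier B \<Longrightarrow> neg B x \<in> carrier B"
  using finite_boolean_algebra unfolding finite_boolean_algebra_def by auto

lemma meet_closed [simp]: "x \<in> carrier B \<Longrightarrow> y \<in> carrier B \<Longrightarrow> meet B x y \<in> carrier B"
  unfolding meet_def by simp

context
  fixes x y z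
  assumes x: "x \<in> carrier B" and y: "y \<in> carrier B" and z: "z \<in> carrier B"
begin

lemma join_commute: "join B x y = join B y x"
  and meet_commute: "meet B x y = meet B y x"
  and join_meet_distrib: "join B x (meet B y z) = meet B (join B x y) (join B x z)"
  and meet_join_distrib: "meet B x (join B y z) = join B (meet B x y) (meet B x z)"
  and join_bot: "join B x (bot B) = x"
  and meet_top: "meet B x (top B) = x"
  and join_neg: "join B x (neg B x) = top B"
  and meet_neg: "meet B x (neg B x) = bot B"
  using finite_boolean_algebra x y z unfolding finite_boolean_algebra_def by blast+

end

lemma join_idem:
  assumes x: "x \<in> carrier B"
  shows "join B x x = x"
proof -
  have "join B x x = meet B (join B x x) (join B x (neg B x))"
    using x by (simp add: meet_top join_neg)
  also have "\<dots> = join B x (meet B x (neg B x))"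
    using x by (simp add: join_meet_distrib)
  also have "\<dots> = x"
    using x by (simp add: meet_neg join_bot)
  finally show ?thesis .
qed

lemma join_top:
  assumes x: "x \<in> carrier B"
  shows "join B x (top B) = top B"
proof -
  have "join B x (top B) = meet B (join B x (neg B x)) (join B x (top B))"
    using x by (simp add: join_neg meet_commute[of "top B"] meet_top)
  also have "\<dots> = join B x (meet B (neg B x) (top B))"
    using x by (simp add: join_meet_distrib)
  also have "\<dots> = top B"
    using x by (simp add: meet_top join_neg)
  finally show ?thesis .
qed

lemma meet_bot:
  assumes x: "x \<in> carrier B"
  shows "meet B x (bot B) = bot B"
proof -
  have "meet B x (bot B) = join B (meet B x (neg B x)) (meet B x (bot B))"
    using x by (simp add: meet_neg join_commute[of "bot B"] join_bot)
  also have "\<dots> = meet B x (join B (neg B x) (bot B))"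
    using x by (simp add: meet_join_distrib)
  also have "\<dots> = bot B"
    using x by (simp add: join_bot meet_neg)
  finally show ?thesis .
qed

lemma join_meet_absorb:
  assumes x: "x \<in> carrier B" and y: "y \<in> carrier B"
  shows "join B x (meet B x y) = x"
proof -
  have "join B x (meet B x y) = join B (meet B x (top B)) (meet B x y)"
    using x by (simp add: meet_top)
  also have "\<dots> = meet B x (join B (top B) y)"
    using x y by (simp add: meet_join_distrib)
  also have "\<dots> = x"
    using x y by (simp add: join_commute[of "top B"] join_top meet_top)
  finally show ?thesis .
qed

lemma meet_join_absorb:
  assumes x: "x \<in> carrier B" and y: "y \<in> carrier B"
  shows "meet B x (join B x y) = x"
proof -
  have "meet B x (join B x y) = meet B (join B x (bot B)) (join B x y)"
    using x by (simp add: join_bot)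
  also have "\<dots> = join B x (meet B (bot B) y)"
    using x y by (simp add: join_meet_distrib)
  also have "\<dots> = x"
    using x y by (simp add: meet_commute[of "bot B"] meet_bot join_bot)
  finally show ?thesis .
qed

lemma meet_decompose:
  assumes x: "x \<in> carrier B" and w: "w \<in> carrier B"
  shows "w = join B (meet B x w) (meet B (neg B x) w)"
proof -
  have "w = meet B w (join B x (neg B x))"
    using w x by (simp add: join_neg meet_top)
  also have "\<dots> = join B (meet B x w) (meet B (neg B x) w)"
    using w x by (simp add: meet_join_distrib meet_commute[of w])
  finally show ?thesis .
qed

text \<open>Associativity is not among Huntington's postulates: both sides have the same meets
  with x and with the complement of x.\<close>

lemma join_assoc:
  assumes x: "x \<in> carrier B" and y: "y \<in> carrier B" and z: "z \<in> carrier B"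
  shows "join B x (join B y z) = join B (join B x y) z"
proof -
  have bot_join: "join B (bot B) w = w" if "w \<in> carrier B" for w
    using that by (simp add: join_commute[of "bot B"] join_bot)
  have "meet B x (join B x (join B y z)) = x" "meet B x (join B (join B x y) z) = x"
    using x y z by (simp_all add: meet_join_absorb meet_join_distrib[of x "join B x y"] join_meet_absorb)
  moreover have "meet B (neg B x) (join B x (join B y z)) = meet B (neg B x) (join B y z)"
    "meet B (neg B x) (join B (join B x y) z) = meet B (neg B x) (join B y z)"
    using x y z by (simp_all add: meet_join_distrib meet_commute[of "neg B x" x] meet_neg bot_join)
  ultimately show ?thesis
    using meet_decompose[OF x, of "join B x (join B y z)"] meet_decompose[OF x, of "join B (join B x y) z"]
      x y z by simp
qed

lemma le_refl: "x \<in> carrier B \<Longrightarrow> le B x x"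
  by (simp add: le_def join_idem)

lemma le_antisym: "x \<in> carrier B \<Longrightarrow> y \<in> carrier B \<Longrightarrow> le B x y \<Longrightarrow> le B y x \<Longrightarrow> x = y"
  by (simp add: le_def join_commute)

lemma le_trans:
  "x \<in> carrier B \<Longrightarrow> y \<in> carrier B \<Longrightarrow> z \<in> carrier B \<Longrightarrow> le B x y \<Longrightarrow> le B y z \<Longrightarrow> le B x z"
  unfolding le_def by (metis join_assoc)

lemma meet_le1: "x \<in> carrier B \<Longrightarrow> y \<in> carrier B \<Longrightarrow> le B (meet B x y) x"
  unfolding le_def by (simp add: join_commute join_meet_absorb)

lemma meet_le2: "x \<in> carrier B \<Longrightarrow> y \<in> carrier B \<Longrightarrow> le B (meet B x y) y"
  using meet_le1[of y x] by (simp add: meet_commute)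

lemma le_meetI:
  "x \<in> carrier B \<Longrightarrow> y \<in> carrier B \<Longrightarrow> z \<in> carrier B \<Longrightarrow> le B z x \<Longrightarrow> le B z y \<Longrightarrow> le B z (meet B x y)"
  unfolding le_def by (simp add: join_meet_distrib)

lemma meet_eq_left_iff: "x \<in> carrier B \<Longrightarrow> y \<in> carrier B \<Longrightarrow> meet B x y = x \<longleftrightarrow> le B x y"
  unfolding le_def by (metis meet_join_absorb join_meet_absorb join_commute meet_commute meet_closed)

lemma card_down_less:
  assumes x: "x \<in> carrier B" and y: "y \<in> carrier B" and "le B x y" "x \<noteq> y"
  shows "card {t \<in> carrier B. le B t x} < card {t \<in> carrier B. le B t y}"
proof (rule psubset_card_mono)
  have "\<not> le B y x"
    using assms le_antisym by blast
  then have "y \<in> {t \<in> carrier B. le B t y} - {t \<in> carrier B. le B t x}"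
    using y by (simp add: le_refl)
  moreover have "{t \<in> carrier B. le B t x} \<subseteq> {t \<in> carrier B. le B t y}"
    using assms le_trans[of _ x y] by blast
  ultimately show "{t \<in> carrier B. le B t x} \<subset> {t \<in> carrier B. le B t y}"
    by blast
qed (simp add: finite_carrier)

lemma card_down_mono:
  "x \<in> carrier B \<Longrightarrow> y \<in> carrier B \<Longrightarrow> le B x y \<Longrightarrow>
    card {t \<in> carrier B. le B t x} \<le> card {t \<in> carrier B. le B t y}"
  using card_down_less by fastforce

lemma le_bot_iff: "x \<in> carrier B \<Longrightarrow> le B x (bot B) \<longleftrightarrow> x = bot B"
  unfolding le_def by (simp add: join_bot join_idem)

end

locale carrier_nalg =
  fixes B :: "('a, 'b) nalg_scheme"
  assumes nalg: "nalg B"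

sublocale carrier_nalg \<subseteq> carrier_boolean_algebra
  using nalg by unfold_locales (simp add: nalg_def)

context carrier_nalg
begin

lemma comp_closed [simp]: "x \<in> carrier B \<Longrightarrow> y \<in> carrier B \<Longrightarrow> comp B x y \<in> carrier B"
  and conv_closed [simp]: "x \<in> carrier B \<Longrightarrow> conv B x \<in> carrier B"
  using nalg unfolding nalg_def by auto

lemma conv_conv [simp]: "x \<in> carrier B \<Longrightarrow> conv B (conv B x) = x"
  using nalg unfolding nalg_def by blast

lemma conv_join: "x \<in> carrier B \<Longrightarrow> y \<in> carrier B \<Longrightarrow>
    conv B (join B x y) = join B (conv B x) (conv B y)"
  and conv_comp: "x \<in> carrier B \<Longrightarrow> y \<in> carrier B \<Longrightarrow>
    conv B (comp B x y) = comp B (conv B y) (conv B x)"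
  and comp_join_right: "x \<in> carrier B \<Longrightarrow> y \<in> carrier B \<Longrightarrow> z \<in> carrier B \<Longrightarrow>
    comp B x (join B y z) = join B (comp B x y) (comp B x z)"
  using nalg unfolding nalg_def by blast+

lemma comp_join_left:
  assumes x: "x \<in> carrier B" and y: "y \<in> carrier B" and z: "z \<in> carrier B"
  shows "comp B (join B y z) x = join B (comp B y x) (comp B z x)"
proof -
  have "comp B (join B y z) x = conv B (comp B (conv B x) (join B (conv B y) (conv B z)))"
    using x y z by (simp add: conv_comp conv_join)
  also have "\<dots> = join B (comp B y x) (comp B z x)"
    using x y z by (simp add: comp_join_right conv_join conv_comp)
  finally show ?thesis .
qed

lemma comp_mono:
  assumes "x \<in> carrier B" "y \<in> carrier B" "x' \<in> carrier B" "y' \<in> carrier B" "le B x x'" "le B y y'"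
  shows "le B (comp B x y) (comp B x' y')"
proof (rule le_trans)
  show "le B (comp B x y) (comp B x' y)"
    using assms unfolding le_def by (metis comp_join_left)
  show "le B (comp B x' y) (comp B x' y')"
    using assms unfolding le_def by (metis comp_join_right)
qed (use assms in simp_all)

lemma conv_mono: "x \<in> carrier B \<Longrightarrow> y \<in> carrier B \<Longrightarrow> le B x y \<Longrightarrow> le B (conv B x) (conv B y)"
  unfolding le_def by (metis conv_join)

lemma conv_le_iff: "x \<in> carrier B \<Longrightarrow> y \<in> carrier B \<Longrightarrow> le B (conv B x) (conv B y) \<longleftrightarrow> le B x y"
  by (metis conv_mono conv_conv conv_closed)

lemma conv_meet:
  assumes x: "x \<in> carrier B" and y: "y \<in> carrier B"
  shows "conv B (meet B x y) = meet B (conv B x) (conv B y)"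
proof (rule le_antisym)
  show "le B (conv B (meet B x y)) (meet B (conv B x) (conv B y))"
    using x y by (simp add: le_meetI conv_mono meet_le1 meet_le2)
  have "le B (meet B (conv B x) (conv B y)) (conv B x)" "le B (meet B (conv B x) (conv B y)) (conv B y)"
    using x y by (simp_all add: meet_le1 meet_le2)
  then have "le B (conv B (meet B (conv B x) (conv B y))) (meet B x y)"
    using x y by (simp add: le_meetI flip: conv_le_iff[of _ x] conv_le_iff[of _ y])
  then show "le B (meet B (conv B x) (conv B y)) (conv B (meet B x y))"
    using x y by (simp flip: conv_le_iff[of "meet B (conv B x) (conv B y)"])
qed (use x y in simp_all)

end

section \<open>Deflationary iteration\<close>

context
  fixes ok :: "'x \<Rightarrow> bool" and leq :: "'x \<Rightarrow> 'x \<Rightarrow> bool"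
  assumes leq_refl: "\<And>y. ok y \<Longrightarrow> leq y y"
    and leq_trans: "\<And>y z w. ok y \<Longrightarrow> ok z \<Longrightarrow> ok w \<Longrightarrow> leq y z \<Longrightarrow> leq z w \<Longrightarrow> leq y w"
begin

lemma fold_deflationary:
  assumes step: "\<And>s y. s \<in> set l \<Longrightarrow> ok y \<Longrightarrow> ok (g s y) \<and> leq (g s y) y" and "ok x"
  shows "ok (fold g l x) \<and> leq (fold g l x) x"
proof (rule fold_invariant[where Q = "\<lambda>s. s \<in> set l"])
  show "ok x \<and> leq x x"
    using \<open>ok x\<close> leq_refl by simp
  fix s y
  assume "s \<in> set l" "ok y \<and> leq y x"
  then show "ok (g s y) \<and> leq (g s y) x"
    using step[of s y] leq_trans[of "g s y" y x] \<open>ok x\<close> by blast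
qed

lemma fold_eq_imp_step_fixed:
  assumes step: "\<And>s y. s \<in> set l \<Longrightarrow> ok y \<Longrightarrow> ok (g s y) \<and> leq (g s y) y"
    and antisym: "\<And>y z. ok y \<Longrightarrow> ok z \<Longrightarrow> leq y z \<Longrightarrow> leq z y \<Longrightarrow> y = z"
    and "ok x" "fold g l x = x" "s \<in> set l"
  shows "g s x = x"
  using step assms(3-5)
proof (induction l arbitrary: x)
  case (Cons s' l)
  let ?y = "g s' x"
  have y: "ok ?y" "leq ?y x"
    using Cons.prems(1,2) by auto
  have "ok (fold g l ?y) \<and> leq (fold g l ?y) ?y"
    using fold_deflationary[of l g ?y] Cons.prems(1) y(1) by simp
  moreover have "fold g l ?y = x"
    using Cons.prems(3) by simp
  ultimately have "?y = x"
    using antisym[of ?y x] y Cons.prems(2) by simp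
  then show ?case
    using Cons.IH[of x] Cons.prems by auto
qed simp

end

lemma while_option_fixpoint:
  fixes \<mu> :: "'x \<Rightarrow> nat"
  assumes "I x" and "\<And>y. I y \<Longrightarrow> I (f y)" and "\<And>y. I y \<Longrightarrow> f y \<noteq> y \<Longrightarrow> \<mu> (f y) < \<mu> y"
  obtains t where "while_option (\<lambda>y. f y \<noteq> y) f x = Some t" "I t" "f t = t"
proof -
  obtain t where t: "while_option (\<lambda>y. f y \<noteq> y) f x = Some t"
    using measure_while_option_Some[of I "\<lambda>y. f y \<noteq> y" f \<mu> x] assms by blast
  moreover have "I t"
    using while_option_rule[OF _ t] assms(1,2) by blast
  ultimately show thesis
    using while_option_stop[OF t] that by simp
qed

locale nalg_family =
  fixes m :: nat and A :: "nat \<Rightarrow> 'a nalg"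
  assumes nalg_component: "k < m \<Longrightarrow> nalg (A k)"
begin

lemma component: "k < m \<Longrightarrow> carrier_nalg (A k)"
  by (simp add: carrier_nalg.intro nalg_component)

lemma component_ba: "k < m \<Longrightarrow> carrier_boolean_algebra (A k)"
  using nalg_component by (simp add: carrier_boolean_algebra_def nalg_def)

lemma is_rel_nth: "is_rel m A R \<Longrightarrow> k < m \<Longrightarrow> R ! k \<in> carrier (A k)"
  by (simp add: is_rel_def)

lemma is_rel_rcomp [simp]: "is_rel m A R \<Longrightarrow> is_rel m A R' \<Longrightarrow> is_rel m A (rcomp m A R R')"
  and is_rel_rmeet [simp]: "is_rel m A R \<Longrightarrow> is_rel m A R' \<Longrightarrow> is_rel m A (rmeet m A R R')"
  and is_rel_rconv [simp]: "is_rel m A R \<Longrightarrow> is_rel m A (rconv m A R)"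
  by (auto simp: is_rel_def rcomp_def rmeet_def rconv_def
      carrier_nalg.comp_closed[OF component] carrier_nalg.conv_closed[OF component]
      carrier_boolean_algebra.meet_closed[OF component_ba])

lemma nth_rcomp [simp]: "k < m \<Longrightarrow> rcomp m A R R' ! k = comp (A k) (R ! k) (R' ! k)"
  and nth_rmeet [simp]: "k < m \<Longrightarrow> rmeet m A R R' ! k = meet (A k) (R ! k) (R' ! k)"
  and nth_rconv [simp]: "k < m \<Longrightarrow> rconv m A R ! k = conv (A k) (R ! k)"
  by (simp_all add: rcomp_def rmeet_def rconv_def)

lemma rel_eqI: "is_rel m A R \<Longrightarrow> is_rel m A R' \<Longrightarrow> (\<And>k. k < m \<Longrightarrow> R ! k = R' ! k) \<Longrightarrow> R = R'"
  by (simp add: is_rel_def nth_equalityI)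

lemma rleD: "rle m A R R' \<Longrightarrow> k < m \<Longrightarrow> le (A k) (R ! k) (R' ! k)"
  by (simp add: rle_def)

lemma rle_refl: "is_rel m A R \<Longrightarrow> rle m A R R"
  by (simp add: rle_def is_rel_def carrier_boolean_algebra.le_refl[OF component_ba])

lemma rle_trans:
  assumes "is_rel m A R" "is_rel m A R'" "is_rel m A R''" "rle m A R R'" "rle m A R' R''"
  shows "rle m A R R''"
  unfolding rle_def
proof (intro allI impI)
  fix k
  assume "k < m"
  then show "le (A k) (R ! k) (R'' ! k)"
    using assms carrier_boolean_algebra.le_trans[OF component_ba[OF \<open>k < m\<close>], of _ "R' ! k"]
    by (simp add: rleD is_rel_nth)
qed

lemma rle_antisym: "is_rel m A R \<Longrightarrow> is_rel m A R' \<Longrightarrow> rle m A R R' \<Longrightarrow> rle m A R' R \<Longrightarrow> R = R'"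
  by (rule rel_eqI) (auto simp: rle_def is_rel_def intro: carrier_boolean_algebra.le_antisym[OF component_ba])

lemma rmeet_le1: "is_rel m A R \<Longrightarrow> is_rel m A R' \<Longrightarrow> rle m A (rmeet m A R R') R"
  and rmeet_le2: "is_rel m A R \<Longrightarrow> is_rel m A R' \<Longrightarrow> rle m A (rmeet m A R R') R'"
  by (simp_all add: rle_def is_rel_def carrier_boolean_algebra.meet_le1[OF component_ba]
      carrier_boolean_algebra.meet_le2[OF component_ba])

lemma rle_rmeetI:
  "is_rel m A R \<Longrightarrow> is_rel m A R' \<Longrightarrow> is_rel m A Q \<Longrightarrow> rle m A Q R \<Longrightarrow> rle m A Q R' \<Longrightarrow>
    rle m A Q (rmeet m A R R')"
  by (simp add: rle_def is_rel_def carrier_boolean_algebra.le_meetI[OF component_ba])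

lemma rmeet_eq_left_iff:
  assumes "is_rel m A R" "is_rel m A R'"
  shows "rmeet m A R R' = R \<longleftrightarrow> rle m A R R'"
proof
  assume "rmeet m A R R' = R"
  then show "rle m A R R'"
    using rmeet_le2[OF assms] by simp
next
  assume "rle m A R R'"
  then show "rmeet m A R R' = R"
    using assms by (intro rle_antisym) (simp_all add: rmeet_le1 rle_rmeetI rle_refl)
qed

lemma rcomp_mono:
  "is_rel m A R \<Longrightarrow> is_rel m A R' \<Longrightarrow> is_rel m A Q \<Longrightarrow> is_rel m A Q' \<Longrightarrow>
    rle m A Q R \<Longrightarrow> rle m A Q' R' \<Longrightarrow> rle m A (rcomp m A Q Q') (rcomp m A R R')"
  by (simp add: rle_def is_rel_def carrier_nalg.comp_mono[OF component])

lemma rconv_mono: "is_rel m A R \<Longrightarrow> is_rel m A Q \<Longrightarrow> rle m A Q R \<Longrightarrow> rle m A (rconv m A Q) (rconv m A R)"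
  by (simp add: rle_def is_rel_def carrier_nalg.conv_mono[OF component])

lemma rconv_rconv [simp]: "is_rel m A R \<Longrightarrow> rconv m A (rconv m A R) = R"
  by (rule rel_eqI) (simp_all add: is_rel_nth carrier_nalg.conv_conv[OF component])

lemma rconv_rmeet:
  "is_rel m A R \<Longrightarrow> is_rel m A R' \<Longrightarrow> rconv m A (rmeet m A R R') = rmeet m A (rconv m A R) (rconv m A R')"
  by (rule rel_eqI) (simp_all add: is_rel_nth carrier_nalg.conv_meet[OF component])

lemma rconv_rcomp:
  "is_rel m A R \<Longrightarrow> is_rel m A R' \<Longrightarrow> rconv m A (rcomp m A R R') = rcomp m A (rconv m A R') (rconv m A R)"
  by (rule rel_eqI) (simp_all add: is_rel_nth carrier_nalg.conv_comp[OF component])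

lemma rle_bot:
  assumes "is_rel m A Q" "rle m A Q R" "k < m" "R ! k = bot (A k)"
  shows "Q ! k = bot (A k)"
proof -
  have "le (A k) (Q ! k) (R ! k)"
    using assms(2,3) by (rule rleD)
  moreover have "Q ! k \<in> carrier (A k)"
    using assms(1,3) by (rule is_rel_nth)
  ultimately show ?thesis
    using carrier_boolean_algebra.le_bot_iff[OF component_ba[OF \<open>k < m\<close>]] assms(4) by simp
qed

definition rsize :: "'a list \<Rightarrow> nat" where
  "rsize R = (\<Sum>k<m. card {t \<in> carrier (A k). le (A k) t (R ! k)})"

lemma rsize_less:
  assumes R: "is_rel m A R" and R': "is_rel m A R'" and le: "rle m A R R'" and "R \<noteq> R'"
  shows "rsize R < rsize R'"
proof -
  have down_mono: "card {t \<in> carrier (A l). le (A l) t (R ! l)} \<le> card {t \<in> carrier (A l). le (A l) t (R' ! l)}"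
    if "l < m" for l
    using R R' le that carrier_boolean_algebra.card_down_mono[OF component_ba[OF that]]
    by (simp add: is_rel_def rle_def)
  obtain k where k: "k < m" "R ! k \<noteq> R' ! k"
    using rel_eqI[OF R R'] \<open>R \<noteq> R'\<close> by auto
  have "card {t \<in> carrier (A k). le (A k) t (R ! k)} < card {t \<in> carrier (A k). le (A k) t (R' ! k)}"
    using R R' le k carrier_boolean_algebra.card_down_less[OF component_ba[OF k(1)]]
    by (simp add: is_rel_def rle_def)
  then show ?thesis
    unfolding rsize_def using k(1) down_mono by (intro sum_strict_mono_ex1) auto
qed

lemma rsize_mono: "is_rel m A R \<Longrightarrow> is_rel m A R' \<Longrightarrow> rle m A R R' \<Longrightarrow> rsize R \<le> rsize R'"
  using rsize_less[of R R'] by fastforce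

end

section \<open>Projection closure\<close>

lemma proj_closedD:
  "proj_closed m A P R \<Longrightarrow> i < m \<Longrightarrow> j < m \<Longrightarrow> i \<noteq> j \<Longrightarrow> le (A j) (R ! j) (P i j (R ! i))"
  by (simp add: proj_closed_def)

lemma net_proj_closedD:
  "net_proj_closed m A P E N \<Longrightarrow> x \<in> E \<Longrightarrow> y \<in> E \<Longrightarrow> x \<noteq> y \<Longrightarrow> proj_closed m A P (N x y)"
  by (simp add: net_proj_closed_def)

locale multi_alg =
  fixes m :: nat and A :: "nat \<Rightarrow> 'a nalg" and P :: "nat \<Rightarrow> nat \<Rightarrow> 'a \<Rightarrow> 'a"
  assumes multi_algebra: "multi_algebra m A P"

sublocale multi_alg \<subseteq> nalg_family m A
  using multi_algebra by unfold_locales (simp add: multi_algebra_def)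

context multi_alg
begin

context
  fixes i j
  assumes ij: "i < m" "j < m" "i \<noteq> j"
begin

lemma proj_closed_carrier: "r \<in> carrier (A i) \<Longrightarrow> P i j r \<in> carrier (A j)"
  and proj_conv: "r \<in> carrier (A i) \<Longrightarrow> P i j (conv (A i) r) = conv (A j) (P i j r)"
  using multi_algebra ij by (simp_all add: multi_algebra_def)

lemma proj_mono: "r \<in> carrier (A i) \<Longrightarrow> r' \<in> carrier (A i) \<Longrightarrow> le (A i) r r' \<Longrightarrow> le (A j) (P i j r) (P i j r')"
  using multi_algebra ij unfolding multi_algebra_def le_def by metis

lemma nth_proj_pair_step:
  "is_rel m A R \<Longrightarrow> proj_pair_step A P (i, j) R ! k = (if k = j then meet (A j) (R ! j) (P i j (R ! i)) else R ! k)"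
  using ij by (simp add: proj_pair_step_def is_rel_def)

lemma proj_pair_step_le:
  assumes R: "is_rel m A R"
  shows "is_rel m A (proj_pair_step A P (i, j) R) \<and> rle m A (proj_pair_step A P (i, j) R) R"
  using R ij carrier_boolean_algebra.meet_le1[OF component_ba] rle_refl[OF R]
  by (auto simp: is_rel_def rle_def proj_pair_step_def nth_list_update proj_closed_carrier
      carrier_boolean_algebra.meet_closed[OF component_ba])

lemma le_proj_pair_step:
  assumes R: "is_rel m A R" and Q: "is_rel m A Q" "proj_closed m A P Q" "rle m A Q R"
  shows "rle m A Q (proj_pair_step A P (i, j) R)"
proof -
  interpret Aj: carrier_boolean_algebra "A j"
    using component_ba[OF ij(2)] .
  have "le (A j) (Q ! j) (P i j (Q ! i))"
    using Q(2) ij by (simp add: proj_closed_def)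
  moreover have "le (A j) (P i j (Q ! i)) (P i j (R ! i))"
    using Q R ij by (simp add: proj_mono is_rel_nth rleD)
  ultimately have "le (A j) (Q ! j) (P i j (R ! i))"
    using Q R ij by (blast intro: Aj.le_trans is_rel_nth proj_closed_carrier)
  then have "le (A j) (Q ! j) (meet (A j) (R ! j) (P i j (R ! i)))"
    using Q R ij by (simp add: Aj.le_meetI is_rel_nth proj_closed_carrier rleD)
  then show ?thesis
    using Q R ij by (simp add: rle_def nth_proj_pair_step rleD)
qed

lemma proj_pair_step_eq_iff:
  assumes R: "is_rel m A R"
  shows "proj_pair_step A P (i, j) R = R \<longleftrightarrow> le (A j) (R ! j) (P i j (R ! i))"
proof -
  have "proj_pair_step A P (i, j) R = R \<longleftrightarrow> meet (A j) (R ! j) (P i j (R ! i)) = R ! j"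
    using R ij by (auto simp: proj_pair_step_def is_rel_def list_update_id list_update_same_conv)
  also have "\<dots> \<longleftrightarrow> le (A j) (R ! j) (P i j (R ! i))"
    using R ij by (simp add: carrier_boolean_algebra.meet_eq_left_iff[OF component_ba] is_rel_nth
        proj_closed_carrier)
  finally show ?thesis .
qed

end

lemma proj_round_le:
  "is_rel m A R \<Longrightarrow> is_rel m A (proj_round m A P R) \<and> rle m A (proj_round m A P R) R"
  unfolding proj_round_def
  by (rule fold_deflationary[where ok = "is_rel m A" and leq = "rle m A", OF rle_refl rle_trans]) (auto simp: proj_pair_step_le)

lemma le_proj_round:
  assumes "is_rel m A R" "is_rel m A Q" "proj_closed m A P Q" "rle m A Q R"
  shows "rle m A Q (proj_round m A P R)"
  unfolding proj_round_def
  by (rule fold_invariant[where Q = "\<lambda>(i, j). i < m \<and> j < m \<and> i \<noteq> j"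
        and P = "\<lambda>R. is_rel m A R \<and> rle m A Q R", THEN conjunct2])
    (use assms in \<open>auto simp: proj_pair_step_le le_proj_pair_step\<close>)

lemma proj_round_eq_imp_proj_closed:
  assumes R: "is_rel m A R" and fixed: "proj_round m A P R = R"
  shows "proj_closed m A P R"
  unfolding proj_closed_def
proof (intro allI impI)
  fix i j
  assume ij: "i < m" "j < m" "i \<noteq> j"
  have "proj_pair_step A P (i, j) R = R"
    by (rule fold_eq_imp_step_fixed[where ok = "is_rel m A" and leq = "rle m A" and g = "proj_pair_step A P"
          and l = "[(i, j). i \<leftarrow> [0..<m], j \<leftarrow> [0..<m], i \<noteq> j]", OF rle_refl rle_trans])
      (use R ij fixed rle_antisym in \<open>auto simp: proj_round_def proj_pair_step_le\<close>)
  then show "le (A j) (R ! j) (P i j (R ! i))"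
    using R ij by (simp add: proj_pair_step_eq_iff)
qed

lemma proj_closure:
  assumes R: "is_rel m A R"
  shows "is_rel m A (proj_closure m A P R)" "rle m A (proj_closure m A P R) R"
    "proj_closed m A P (proj_closure m A P R)"
    "\<And>Q. is_rel m A Q \<Longrightarrow> proj_closed m A P Q \<Longrightarrow> rle m A Q R \<Longrightarrow> rle m A Q (proj_closure m A P R)"
proof -
  obtain t where t: "while_option (\<lambda>R. proj_round m A P R \<noteq> R) (proj_round m A P) R = Some t"
    and t_le: "is_rel m A t \<and> rle m A t R" and fixed: "proj_round m A P t = t"
  proof (rule while_option_fixpoint[where I = "\<lambda>T. is_rel m A T \<and> rle m A T R" and \<mu> = rsize])
    show "is_rel m A R \<and> rle m A R R"
      using R by (simp add: rle_refl)
    fix T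
    assume T: "is_rel m A T \<and> rle m A T R"
    then show "is_rel m A (proj_round m A P T) \<and> rle m A (proj_round m A P T) R"
      using proj_round_le[of T] rle_trans[of "proj_round m A P T" T R] R by blast
    show "proj_round m A P T \<noteq> T \<Longrightarrow> rsize (proj_round m A P T) < rsize T"
      using proj_round_le[of T] T by (simp add: rsize_less)
  qed
  have closure: "proj_closure m A P R = t"
    using t by (simp add: proj_closure_def)
  show "is_rel m A (proj_closure m A P R)" "rle m A (proj_closure m A P R) R"
    using t_le closure by simp_all
  show "proj_closed m A P (proj_closure m A P R)"
    using t_le fixed closure by (simp add: proj_round_eq_imp_proj_closed)
  fix Q
  assume Q: "is_rel m A Q" "proj_closed m A P Q" "rle m A Q R"
  have "is_rel m A t \<and> rle m A Q t"
    by (rule while_option_rule[OF _ t]) (use R Q in \<open>auto simp: proj_round_le le_proj_round\<close>)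
  then show "rle m A Q (proj_closure m A P R)"
    using closure by simp
qed

lemma proj_closure_id: "is_rel m A R \<Longrightarrow> proj_closed m A P R \<Longrightarrow> proj_closure m A P R = R"
  by (intro rle_antisym) (simp_all add: proj_closure rle_refl)

lemma proj_closed_rconv:
  assumes Q: "is_rel m A Q" "proj_closed m A P Q"
  shows "proj_closed m A P (rconv m A Q)"
  unfolding proj_closed_def
proof (intro allI impI)
  fix i j
  assume ij: "i < m" "j < m" "i \<noteq> j"
  have "le (A j) (Q ! j) (P i j (Q ! i))"
    using Q ij by (simp add: proj_closed_def)
  then show "le (A j) (rconv m A Q ! j) (P i j (rconv m A Q ! i))"
    using Q ij carrier_nalg.conv_mono[OF component, of j]
    by (simp add: proj_conv is_rel_nth proj_closed_carrier)
qed

lemma proj_closure_rconv: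
  assumes R: "is_rel m A R"
  shows "proj_closure m A P (rconv m A R) = rconv m A (proj_closure m A P R)"
proof -
  have conv_le: "rle m A (rconv m A (proj_closure m A P R')) (proj_closure m A P (rconv m A R'))"
    if "is_rel m A R'" for R'
    using that by (simp add: proj_closure proj_closed_rconv rconv_mono)
  have "rle m A (proj_closure m A P (rconv m A R)) (rconv m A (proj_closure m A P R))"
    using R rconv_mono[OF _ _ conv_le[of "rconv m A R"]] by (simp add: proj_closure)
  then show ?thesis
    using R conv_le[OF R] by (simp add: proj_closure rle_antisym)
qed

end

section \<open>Networks and composition closure\<close>

lemma triv_inconsistent_mono: "triv_inconsistent m A E' K \<Longrightarrow> E' \<subseteq> E \<Longrightarrow> triv_inconsistent m A E K"
  unfolding triv_inconsistent_def by blast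

lemma comp_closed_subset: "comp_closed m A E K \<Longrightarrow> E' \<subseteq> E \<Longrightarrow> comp_closed m A E' K"
  unfolding comp_closed_def by blast

lemma net_proj_closed_subset: "net_proj_closed m A P E K \<Longrightarrow> E' \<subseteq> E \<Longrightarrow> net_proj_closed m A P E' K"
  unfolding net_proj_closed_def by blast

lemma network_over_subset:
  "network_over m A S E N \<Longrightarrow> E' \<subseteq> E \<Longrightarrow> network_over m A S E' N"
  unfolding network_over_def by (blast intro: finite_subset)

(* Networks are total functions of two variables; refinement must also fix the labels off E,
   otherwise it is not antisymmetric. *)
definition agree_off :: "nat set \<Rightarrow> (nat \<Rightarrow> nat \<Rightarrow> 'a list) \<Rightarrow> (nat \<Rightarrow> nat \<Rightarrow> 'a list) \<Rightarrow> bool" where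
  "agree_off E K N \<longleftrightarrow> (\<forall>x y. \<not> (x \<in> E \<and> y \<in> E \<and> x \<noteq> y) \<longrightarrow> K x y = N x y)"

context nalg_family
begin

definition rel_network :: "nat set \<Rightarrow> (nat \<Rightarrow> nat \<Rightarrow> 'a list) \<Rightarrow> bool" where
  "rel_network E N \<longleftrightarrow>
     (\<forall>x\<in>E. \<forall>y\<in>E. x \<noteq> y \<longrightarrow> is_rel m A (N x y) \<and> N y x = rconv m A (N x y))"

definition rel_labels :: "nat set \<Rightarrow> (nat \<Rightarrow> nat \<Rightarrow> 'a list) \<Rightarrow> bool" where
  "rel_labels E K \<longleftrightarrow> (\<forall>x\<in>E. \<forall>y\<in>E. x \<noteq> y \<longrightarrow> is_rel m A (K x y))"

definition net_le :: "nat set \<Rightarrow> (nat \<Rightarrow> nat \<Rightarrow> 'a list) \<Rightarrow> (nat \<Rightarrow> nat \<Rightarrow> 'a list) \<Rightarrow> bool" where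
  "net_le E K N \<longleftrightarrow> (\<forall>x\<in>E. \<forall>y\<in>E. x \<noteq> y \<longrightarrow> rle m A (K x y) (N x y))"

definition refines :: "nat set \<Rightarrow> (nat \<Rightarrow> nat \<Rightarrow> 'a list) \<Rightarrow> (nat \<Rightarrow> nat \<Rightarrow> 'a list) \<Rightarrow> bool" where
  "refines E K N \<longleftrightarrow> net_le E K N \<and> agree_off E K N"

definition nsize :: "nat set \<Rightarrow> (nat \<Rightarrow> nat \<Rightarrow> 'a list) \<Rightarrow> nat" where
  "nsize E N = (\<Sum>(x, y)\<in>{(x, y). x \<in> E \<and> y \<in> E \<and> x \<noteq> y}. rsize (N x y))"

definition set_edge :: "nat \<Rightarrow> nat \<Rightarrow> 'a list \<Rightarrow> (nat \<Rightarrow> nat \<Rightarrow> 'a list) \<Rightarrow> (nat \<Rightarrow> nat \<Rightarrow> 'a list)" where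
  "set_edge x z r N = (\<lambda>a b. if a = x \<and> b = z then r else if a = z \<and> b = x then rconv m A r else N a b)"

lemma rel_network_is_rel: "rel_network E N \<Longrightarrow> x \<in> E \<Longrightarrow> y \<in> E \<Longrightarrow> x \<noteq> y \<Longrightarrow> is_rel m A (N x y)"
  and rel_network_sym: "rel_network E N \<Longrightarrow> x \<in> E \<Longrightarrow> y \<in> E \<Longrightarrow> x \<noteq> y \<Longrightarrow> N y x = rconv m A (N x y)"
  unfolding rel_network_def by blast+

lemma rel_network_cong:
  assumes N: "rel_network E N" and eq: "\<And>a b. a \<in> E \<Longrightarrow> b \<in> E \<Longrightarrow> a \<noteq> b \<Longrightarrow> T a b = N a b"
  shows "rel_network E T"
  unfolding rel_network_def
proof (intro ballI impI)
  fix a b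
  assume ab: "a \<in> E" "b \<in> E" "a \<noteq> b"
  then show "is_rel m A (T a b) \<and> T b a = rconv m A (T a b)"
    using rel_network_is_rel[OF N ab] rel_network_sym[OF N ab] eq[OF ab] eq[of b a] by simp
qed

lemma rel_network_rel_labels: "rel_network E N \<Longrightarrow> rel_labels E N"
  unfolding rel_network_def rel_labels_def by blast

lemma rel_labelsD: "rel_labels E K \<Longrightarrow> x \<in> E \<Longrightarrow> y \<in> E \<Longrightarrow> x \<noteq> y \<Longrightarrow> is_rel m A (K x y)"
  by (simp add: rel_labels_def)

lemma net_leD: "net_le E K N \<Longrightarrow> x \<in> E \<Longrightarrow> y \<in> E \<Longrightarrow> x \<noteq> y \<Longrightarrow> rle m A (K x y) (N x y)"
  by (simp add: net_le_def)

lemma net_le_refl: "rel_labels E N \<Longrightarrow> net_le E N N"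
  by (simp add: net_le_def rel_labels_def rle_refl)

lemma net_le_trans:
  assumes "rel_labels E K" "rel_labels E L" "rel_labels E N" "net_le E K L" "net_le E L N"
  shows "net_le E K N"
  unfolding net_le_def
proof (intro ballI impI)
  fix x y
  assume xy: "x \<in> E" "y \<in> E" "x \<noteq> y"
  show "rle m A (K x y) (N x y)"
    by (rule rle_trans[OF rel_labelsD[OF assms(1) xy] rel_labelsD[OF assms(2) xy]
          rel_labelsD[OF assms(3) xy] net_leD[OF assms(4) xy] net_leD[OF assms(5) xy]])
qed

lemma net_le_antisym:
  assumes "rel_labels E K" "rel_labels E N" "net_le E K N" "net_le E N K" "x \<in> E" "y \<in> E" "x \<noteq> y"
  shows "K x y = N x y"
  by (rule rle_antisym[OF rel_labelsD[OF assms(1,5-7)] rel_labelsD[OF assms(2,5-7)]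
        net_leD[OF assms(3,5-7)] net_leD[OF assms(4,5-7)]])

lemma refines_refl: "rel_network E N \<Longrightarrow> refines E N N"
  by (simp add: refines_def agree_off_def net_le_refl rel_network_rel_labels)

lemma refines_trans:
  "rel_network E K \<Longrightarrow> rel_network E L \<Longrightarrow> rel_network E N \<Longrightarrow> refines E K L \<Longrightarrow> refines E L N \<Longrightarrow>
    refines E K N"
  unfolding refines_def agree_off_def by (metis net_le_trans rel_network_rel_labels)

lemma refines_antisym:
  assumes "rel_network E K" "rel_network E N" "refines E K N" "refines E N K"
  shows "K = N"
proof (intro ext)
  fix x y
  show "K x y = N x y"
    using assms net_le_antisym[of E K N x y]
    by (cases "x \<in> E \<and> y \<in> E \<and> x \<noteq> y") (auto simp: refines_def agree_off_def rel_network_rel_labels)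
qed

lemma nsize_less:
  assumes "finite E" and K: "rel_network E K" and N: "rel_network E N" and "refines E K N" "K \<noteq> N"
  shows "nsize E K < nsize E N"
proof -
  obtain a b where "K a b \<noteq> N a b"
    using \<open>K \<noteq> N\<close> by (auto simp: fun_eq_iff)
  moreover from this have ab: "a \<in> E" "b \<in> E" "a \<noteq> b"
    using assms(4) by (auto simp: refines_def agree_off_def)
  moreover have edge: "is_rel m A (K x y)" "is_rel m A (N x y)" "rle m A (K x y) (N x y)"
    if "x \<in> E" "y \<in> E" "x \<noteq> y" for x y
    using rel_network_is_rel[OF K that] rel_network_is_rel[OF N that]
      net_leD[OF assms(4)[unfolded refines_def, THEN conjunct1] that]
    by simp_all
  moreover have "finite {(x, y). x \<in> E \<and> y \<in> E \<and> x \<noteq> y}"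
    by (rule finite_subset[of _ "E \<times> E"]) (use \<open>finite E\<close> in auto)
  ultimately show ?thesis
    unfolding nsize_def
    by (intro sum_strict_mono_ex1) (auto intro: rsize_mono, use rsize_less in blast)
qed

lemma set_edge_xz: "x \<noteq> z \<Longrightarrow> set_edge x z r N x z = r"
  and set_edge_zx: "x \<noteq> z \<Longrightarrow> set_edge x z r N z x = rconv m A r"
  by (simp_all add: set_edge_def)

(* Not by simp: it loops on the two negated conjunctions of equations between variables. *)
lemma set_edge_other:
  assumes "\<not> (a = x \<and> b = z)" "\<not> (a = z \<and> b = x)"
  shows "set_edge x z r N a b = N a b"
  unfolding set_edge_def if_not_P[OF assms(1)] if_not_P[OF assms(2)] ..

lemma set_edge_cases:
  assumes "x \<noteq> z" "Q x z r" "Q z x (rconv m A r)"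
    and "\<not> (a = x \<and> b = z) \<Longrightarrow> \<not> (a = z \<and> b = x) \<Longrightarrow> Q a b (N a b)"
  shows "Q a b (set_edge x z r N a b)"
proof (cases "a = x \<and> b = z")
  case True
  then show ?thesis
    using assms(1,2) by (simp add: set_edge_xz)
next
  case not_xz: False
  show ?thesis
  proof (cases "a = z \<and> b = x")
    case True
    then show ?thesis
      using assms(1,3) by (simp add: set_edge_zx)
  next
    case False
    then show ?thesis
      unfolding set_edge_other[OF not_xz False] by (rule assms(4)[OF not_xz])
  qed
qed

lemma set_edge_all:
  assumes "x \<noteq> z" "Q x z r" "Q z x (rconv m A r)" "\<And>a b. a \<in> E \<Longrightarrow> b \<in> E \<Longrightarrow> a \<noteq> b \<Longrightarrow> Q a b (N a b)"
  shows "\<forall>a\<in>E. \<forall>b\<in>E. a \<noteq> b \<longrightarrow> Q a b (set_edge x z r N a b)"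
proof (intro ballI impI)
  fix a b
  assume "a \<in> E" "b \<in> E" "a \<noteq> b"
  then show "Q a b (set_edge x z r N a b)"
    using assms by (intro set_edge_cases[where Q = Q]) blast+
qed

lemma set_edge_conv:
  assumes "x \<noteq> z" "is_rel m A r" "N b a = rconv m A (N a b)"
  shows "set_edge x z r N b a = rconv m A (set_edge x z r N a b)"
proof (cases "a = x \<and> b = z")
  case True
  then show ?thesis
    using assms(1) by (simp add: set_edge_xz set_edge_zx)
next
  case not_xz: False
  show ?thesis
  proof (cases "a = z \<and> b = x")
    case True
    then show ?thesis
      using assms(1,2) by (simp add: set_edge_xz set_edge_zx)
  next
    case False
    have swapped: "\<not> (b = x \<and> a = z)" "\<not> (b = z \<and> a = x)"
      using not_xz False by blast+
    show ?thesis
      unfolding set_edge_other[OF not_xz False] set_edge_other[OF swapped] by (rule assms(3))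
  qed
qed

lemma rel_network_set_edge:
  assumes N: "rel_network E N" and xz: "x \<in> E" "z \<in> E" "x \<noteq> z" and r: "is_rel m A r"
  shows "rel_network E (set_edge x z r N)"
  unfolding rel_network_def
proof (intro ballI impI conjI)
  fix a b
  assume ab: "a \<in> E" "b \<in> E" "a \<noteq> b"
  show "is_rel m A (set_edge x z r N a b)"
    by (rule set_edge_cases[where Q = "\<lambda>_ _. is_rel m A"]) (use N ab xz r in \<open>simp_all add: rel_network_is_rel\<close>)
  show "set_edge x z r N b a = rconv m A (set_edge x z r N a b)"
    using xz(3) r rel_network_sym[OF N ab] by (rule set_edge_conv)
qed

lemma net_proj_closed_set_edge:
  assumes "net_proj_closed m A P E N" "x \<noteq> z" "proj_closed m A P r" "proj_closed m A P (rconv m A r)"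
  shows "net_proj_closed m A P E (set_edge x z r N)"
  unfolding net_proj_closed_def using assms(2-4) net_proj_closedD[OF assms(1)]
  by (rule set_edge_all[where Q = "\<lambda>_ _. proj_closed m A P"])

lemma agree_off_set_edge:
  assumes "x \<in> E" "z \<in> E" "x \<noteq> z"
  shows "agree_off E (set_edge x z r N) N"
  unfolding agree_off_def
proof (intro allI impI)
  fix a b
  assume "\<not> (a \<in> E \<and> b \<in> E \<and> a \<noteq> b)"
  then have "\<not> (a = x \<and> b = z)" "\<not> (a = z \<and> b = x)"
    using assms by blast+
  then show "set_edge x z r N a b = N a b"
    by (rule set_edge_other)
qed

lemma comp_triple_step_eq:
  "comp_triple_step m A (x, y, z) N = set_edge x z (rmeet m A (N x z) (rcomp m A (N x y) (N y z))) N"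
  by (simp add: comp_triple_step_def set_edge_def Let_def)

lemma rel_labels_subset: "rel_labels E K \<Longrightarrow> E' \<subseteq> E \<Longrightarrow> rel_labels E' K"
  unfolding rel_labels_def by blast

lemma net_le_subset: "net_le E K N \<Longrightarrow> E' \<subseteq> E \<Longrightarrow> net_le E' K N"
  unfolding net_le_def by blast

lemma network_overI:
  "finite E \<Longrightarrow> rel_network E N \<Longrightarrow> (\<And>x y. x \<in> E \<Longrightarrow> y \<in> E \<Longrightarrow> x \<noteq> y \<Longrightarrow> N x y \<in> S) \<Longrightarrow>
    network_over m A S E N"
  unfolding network_over_def by (blast intro: rel_network_sym)

lemma triv_inconsistent_net_le:
  assumes "rel_labels E K" "net_le E K N" "triv_inconsistent m A E N"
  shows "triv_inconsistent m A E K"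
  using assms rle_bot unfolding triv_inconsistent_def rel_labels_def net_le_def by metis

lemma comp_closedD:
  "comp_closed m A E K \<Longrightarrow> x \<in> E \<Longrightarrow> y \<in> E \<Longrightarrow> z \<in> E \<Longrightarrow> x \<noteq> y \<Longrightarrow> y \<noteq> z \<Longrightarrow> x \<noteq> z \<Longrightarrow>
    rle m A (K x z) (rcomp m A (K x y) (K y z))"
  by (simp add: comp_closed_def)

context
  fixes E :: "nat set" and x y z :: nat
  assumes triangle: "x \<in> E" "y \<in> E" "z \<in> E" "x \<noteq> y" "y \<noteq> z" "x \<noteq> z"
begin

lemma comp_triple_step_refines:
  assumes N: "rel_network E N"
  shows "rel_network E (comp_triple_step m A (x, y, z) N) \<and> refines E (comp_triple_step m A (x, y, z) N) N"
proof -
  let ?r = "rmeet m A (N x z) (rcomp m A (N x y) (N y z))"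
  have r: "is_rel m A ?r" "rle m A ?r (N x z)"
    using triangle by (simp_all add: rel_network_is_rel[OF N] rmeet_le1)
  have "rle m A (rconv m A ?r) (N z x)"
    using r triangle by (simp add: rel_network_sym[OF N, of x z] rel_network_is_rel[OF N] rconv_mono)
  then have "net_le E (set_edge x z ?r N) N"
    unfolding net_le_def using r triangle
    by (auto intro!: set_edge_cases[where Q = "\<lambda>a b v. rle m A v (N a b)"]
        simp: rle_refl rel_network_is_rel[OF N])
  then show ?thesis
    using triangle r by (simp add: comp_triple_step_eq refines_def rel_network_set_edge[OF N] agree_off_set_edge)
qed

lemma le_comp_triple_step:
  assumes N: "rel_network E N" and K: "rel_labels E K" "comp_closed m A E K" "net_le E K N"
  shows "net_le E K (comp_triple_step m A (x, y, z) N)"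
proof -
  have meet_bound: "rle m A (K a c) (rmeet m A (N a c) (rcomp m A (N a b) (N b c)))"
    if abc: "a \<in> E" "b \<in> E" "c \<in> E" "a \<noteq> b" "b \<noteq> c" "a \<noteq> c" for a b c
  proof (rule rle_rmeetI)
    note ab = abc(1,2,4) and bc = abc(2,3,5) and ac = abc(1,3,6)
    have "rle m A (rcomp m A (K a b) (K b c)) (rcomp m A (N a b) (N b c))"
      by (rule rcomp_mono[OF rel_network_is_rel[OF N ab] rel_network_is_rel[OF N bc]
            rel_labelsD[OF K(1) ab] rel_labelsD[OF K(1) bc] net_leD[OF K(3) ab] net_leD[OF K(3) bc]])
    then show "rle m A (K a c) (rcomp m A (N a b) (N b c))"
      using comp_closedD[OF K(2) abc] rle_trans rel_labelsD[OF K(1)] rel_network_is_rel[OF N] abc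
      by (meson is_rel_rcomp)
    show "is_rel m A (N a c)" "is_rel m A (rcomp m A (N a b) (N b c))" "is_rel m A (K a c)"
      using rel_network_is_rel[OF N] rel_labelsD[OF K(1)] abc by simp_all
    show "rle m A (K a c) (N a c)"
      by (rule net_leD[OF K(3) ac])
  qed
  have "rconv m A (rmeet m A (N x z) (rcomp m A (N x y) (N y z))) = rmeet m A (N z x) (rcomp m A (N z y) (N y x))"
    using triangle
    by (simp add: rconv_rmeet rconv_rcomp rel_network_is_rel[OF N] rel_network_sym[OF N, of x z]
        rel_network_sym[OF N, of y z] rel_network_sym[OF N, of x y])
  then show ?thesis
    unfolding comp_triple_step_eq net_le_def
    using meet_bound[of x y z] meet_bound[of z y x] triangle
    by (auto intro!: set_edge_cases[where Q = "\<lambda>a b v. rle m A (K a b) v"] simp: net_leD[OF K(3)])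
qed

end

lemma comp_round_refines:
  assumes "finite E" "rel_network E N"
  shows "rel_network E (comp_round m A E N) \<and> refines E (comp_round m A E N) N"
  unfolding comp_round_def
  by (rule fold_deflationary[where ok = "rel_network E" and leq = "refines E", OF refines_refl refines_trans])
    (use assms in \<open>auto simp: comp_triple_step_refines\<close>)

lemma le_comp_round:
  assumes "finite E" "rel_network E N" "rel_labels E K" "comp_closed m A E K" "net_le E K N"
  shows "net_le E K (comp_round m A E N)"
  unfolding comp_round_def
  by (rule fold_invariant[where Q = "\<lambda>(x, y, z). x \<in> E \<and> y \<in> E \<and> z \<in> E \<and> x \<noteq> y \<and> y \<noteq> z \<and> x \<noteq> z"
        and P = "\<lambda>N. rel_network E N \<and> net_le E K N", THEN conjunct2])
    (use assms in \<open>auto simp: comp_triple_step_refines le_comp_triple_step\<close>)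

lemma comp_round_eq_imp_comp_closed:
  assumes E: "finite E" and N: "rel_network E N" and fixed: "comp_round m A E N = N"
  shows "comp_closed m A E N"
  unfolding comp_closed_def
proof (intro ballI impI)
  fix x y z
  assume triangle: "x \<in> E" "y \<in> E" "z \<in> E" "x \<noteq> y \<and> y \<noteq> z \<and> x \<noteq> z"
  have "comp_triple_step m A (x, y, z) N = N"
    by (rule fold_eq_imp_step_fixed[where ok = "rel_network E" and leq = "refines E"
          and g = "comp_triple_step m A" and l = "[(x, y, z). x \<leftarrow> sorted_list_of_set E,
            y \<leftarrow> sorted_list_of_set E, z \<leftarrow> sorted_list_of_set E, x \<noteq> y \<and> y \<noteq> z \<and> x \<noteq> z]",
          OF refines_refl refines_trans])
      (use E N fixed triangle refines_antisym in \<open>auto simp: comp_round_def comp_triple_step_refines\<close>)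
  then have "rmeet m A (N x z) (rcomp m A (N x y) (N y z)) = N x z"
    using set_edge_xz[of x z _ N] triangle by (metis comp_triple_step_eq)
  then show "rle m A (N x z) (rcomp m A (N x y) (N y z))"
    using triangle by (simp add: rmeet_eq_left_iff rel_network_is_rel[OF N])
qed

lemma comp_closure:
  assumes E: "finite E" and N: "rel_network E N"
  shows "rel_network E (comp_closure m A E N)" "net_le E (comp_closure m A E N) N"
    "comp_closed m A E (comp_closure m A E N)"
    "\<And>K. rel_labels E K \<Longrightarrow> comp_closed m A E K \<Longrightarrow> net_le E K N \<Longrightarrow> net_le E K (comp_closure m A E N)"
proof -
  obtain t where t: "while_option (\<lambda>N. comp_round m A E N \<noteq> N) (comp_round m A E) N = Some t"
    and t_le: "rel_network E t \<and> refines E t N" and fixed: "comp_round m A E t = t"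
  proof (rule while_option_fixpoint[where I = "\<lambda>T. rel_network E T \<and> refines E T N" and \<mu> = "nsize E"])
    show "rel_network E N \<and> refines E N N"
      using N by (simp add: refines_refl)
    fix T
    assume T: "rel_network E T \<and> refines E T N"
    then show "rel_network E (comp_round m A E T) \<and> refines E (comp_round m A E T) N"
      using comp_round_refines[OF E, of T] refines_trans[of E "comp_round m A E T" T N] N by blast
    show "comp_round m A E T \<noteq> T \<Longrightarrow> nsize E (comp_round m A E T) < nsize E T"
      using comp_round_refines[OF E, of T] T by (simp add: nsize_less[OF E])
  qed
  have closure: "comp_closure m A E N = t"
    using t by (simp add: comp_closure_def)
  show "rel_network E (comp_closure m A E N)" "net_le E (comp_closure m A E N) N"
    using t_le closure by (simp_all add: refines_def)
  show "comp_closed m A E (comp_closure m A E N)"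
    using t_le fixed closure E by (simp add: comp_round_eq_imp_comp_closed)
  fix K
  assume K: "rel_labels E K" "comp_closed m A E K" "net_le E K N"
  have "rel_network E t \<and> net_le E K t"
    by (rule while_option_rule[OF _ t]) (use E N K in \<open>auto simp: comp_round_refines le_comp_round\<close>)
  then show "net_le E K (comp_closure m A E N)"
    using closure by simp
qed

end

section \<open>Bi-slices\<close>

definition pair_slice :: "nat \<Rightarrow> nat \<Rightarrow> 'a list \<Rightarrow> 'a list" where
  "pair_slice i j R = [R ! i, R ! j]"

definition put_slice :: "nat \<Rightarrow> nat \<Rightarrow> 'a list \<Rightarrow> 'a list \<Rightarrow> 'a list" where
  "put_slice i j R Q = R[i := Q ! 0, j := Q ! Suc 0]"

lemma pair_slice_nth [simp]:
  "pair_slice i j R ! 0 = R ! i" "pair_slice i j R ! Suc 0 = R ! j" "length (pair_slice i j R) = 2"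
  by (simp_all add: pair_slice_def)

lemma length_2_eq: "length xs = 2 \<Longrightarrow> xs = [xs ! 0, xs ! Suc 0]"
  by (auto simp: numeral_2_eq_2 length_Suc_conv)

lemma bislice_set_eq: "bislice_set S i j = pair_slice i j ` S"
  by (simp add: bislice_set_def pair_slice_def)

lemma bislice_alg_simps [simp]:
  "bislice_alg A i j 0 = A i" "bislice_alg A i j (Suc 0) = A j"
  by (simp_all add: bislice_alg_def)

lemma bislice_proj_simps [simp]:
  "bislice_proj P i j 0 k = P i j" "bislice_proj P i j (Suc 0) k = P j i"
  by (simp_all add: bislice_proj_def)

lemma all_less_2: "(\<forall>k<2. Q k) \<longleftrightarrow> Q 0 \<and> Q (Suc 0)"
  and ex_less_2: "(\<exists>k<2. Q k) \<longleftrightarrow> Q 0 \<or> Q (Suc 0)"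
  unfolding numeral_2_eq_2 by (auto simp: less_Suc_eq)

lemma upt_2: "[0..<2] = [0, Suc 0]"
  by (simp add: numeral_2_eq_2)

lemma bislice_multi_algebra:
  "multi_algebra m A P \<Longrightarrow> i < m \<Longrightarrow> j < m \<Longrightarrow> i \<noteq> j \<Longrightarrow>
    multi_algebra 2 (bislice_alg A i j) (bislice_proj P i j)"
  unfolding multi_algebra_def all_less_2 by simp

lemma is_rel_bislice_iff:
  "is_rel 2 (bislice_alg A i j) R \<longleftrightarrow> length R = 2 \<and> R ! 0 \<in> carrier (A i) \<and> R ! Suc 0 \<in> carrier (A j)"
  by (simp add: is_rel_def all_less_2)

lemma rle_bislice_iff:
  "rle 2 (bislice_alg A i j) R R' \<longleftrightarrow> le (A i) (R ! 0) (R' ! 0) \<and> le (A j) (R ! Suc 0) (R' ! Suc 0)"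
  by (simp add: rle_def all_less_2)

lemma rcomp_bislice:
  "rcomp 2 (bislice_alg A i j) R R' = [comp (A i) (R ! 0) (R' ! 0), comp (A j) (R ! Suc 0) (R' ! Suc 0)]"
  by (simp add: rcomp_def upt_2)

lemma rconv_bislice: "rconv 2 (bislice_alg A i j) R = [conv (A i) (R ! 0), conv (A j) (R ! Suc 0)]"
  by (simp add: rconv_def upt_2)

lemma proj_closed_bislice_iff:
  "proj_closed 2 (bislice_alg A i j) (bislice_proj P i j) R \<longleftrightarrow>
    le (A j) (R ! Suc 0) (P i j (R ! 0)) \<and> le (A i) (R ! 0) (P j i (R ! Suc 0))"
  by (auto simp: proj_closed_def less_2_cases_iff)

lemma triv_inconsistent_bislice_iff:
  "triv_inconsistent 2 (bislice_alg A i j) E N \<longleftrightarrow>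
    (\<exists>x\<in>E. \<exists>y\<in>E. x \<noteq> y \<and> (N x y ! 0 = bot (A i) \<or> N x y ! Suc 0 = bot (A j)))"
  unfolding triv_inconsistent_def ex_less_2 by simp

context nalg_family
begin

context
  fixes i j
  assumes ij: "i < m" "j < m" "i \<noteq> j"
begin

interpretation slice: nalg_family 2 "bislice_alg A i j"
  using ij by unfold_locales (auto simp: less_2_cases_iff nalg_component)

lemma is_rel_pair_slice: "is_rel m A R \<Longrightarrow> is_rel 2 (bislice_alg A i j) (pair_slice i j R)"
  using ij by (simp add: is_rel_bislice_iff is_rel_nth)

lemma rle_pair_slice: "rle m A R R' \<Longrightarrow> rle 2 (bislice_alg A i j) (pair_slice i j R) (pair_slice i j R')"
  using ij by (simp add: rle_bislice_iff rleD)

lemma pair_slice_rcomp: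
  "pair_slice i j (rcomp m A R R') = rcomp 2 (bislice_alg A i j) (pair_slice i j R) (pair_slice i j R')"
  using ij by (simp add: rcomp_bislice pair_slice_def)

lemma pair_slice_rconv: "pair_slice i j (rconv m A R) = rconv 2 (bislice_alg A i j) (pair_slice i j R)"
  using ij by (simp add: rconv_bislice pair_slice_def)

lemma nth_put_slice:
  "is_rel m A R \<Longrightarrow> k < m \<Longrightarrow>
    put_slice i j R Q ! k = (if k = j then Q ! Suc 0 else if k = i then Q ! 0 else R ! k)"
  using ij by (auto simp: put_slice_def is_rel_def nth_list_update)

lemma is_rel_put_slice:
  assumes "is_rel m A R" "is_rel 2 (bislice_alg A i j) Q"
  shows "is_rel m A (put_slice i j R Q)"
proof -
  have "Q ! 0 \<in> carrier (A i)" "Q ! Suc 0 \<in> carrier (A j)"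
    using assms(2) by (simp_all add: is_rel_bislice_iff)
  then show ?thesis
    using assms(1) ij by (auto simp: is_rel_def put_slice_def nth_list_update)
qed

lemma rle_put_slice:
  assumes "is_rel m A R" "is_rel m A R'" "rle m A R R'" "rle 2 (bislice_alg A i j) Q Q'"
  shows "rle m A (put_slice i j R Q) (put_slice i j R' Q')"
proof -
  have "le (A i) (Q ! 0) (Q' ! 0)" "le (A j) (Q ! Suc 0) (Q' ! Suc 0)"
    using assms(4) by (simp_all add: rle_bislice_iff)
  then show ?thesis
    unfolding rle_def using assms(1-3) ij by (simp add: nth_put_slice rleD)
qed

lemma rcomp_put_slice:
  assumes "is_rel m A R" "is_rel m A R'" "is_rel 2 (bislice_alg A i j) Q" "is_rel 2 (bislice_alg A i j) Q'"
  shows "rcomp m A (put_slice i j R Q) (put_slice i j R' Q') =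
    put_slice i j (rcomp m A R R') (rcomp 2 (bislice_alg A i j) Q Q')"
proof (rule rel_eqI)
  show "is_rel m A (rcomp m A (put_slice i j R Q) (put_slice i j R' Q'))"
    "is_rel m A (put_slice i j (rcomp m A R R') (rcomp 2 (bislice_alg A i j) Q Q'))"
    using assms by (simp_all add: is_rel_put_slice)
  fix k
  assume "k < m"
  then show "rcomp m A (put_slice i j R Q) (put_slice i j R' Q') ! k =
      put_slice i j (rcomp m A R R') (rcomp 2 (bislice_alg A i j) Q Q') ! k"
    using assms ij by (simp add: nth_put_slice rcomp_bislice)
qed

lemma put_slice_pair_slice: "is_rel m A R \<Longrightarrow> put_slice i j R (pair_slice i j R) = R"
  by (simp add: put_slice_def pair_slice_def)

lemma pair_slice_put_slice:
  assumes "is_rel m A R" "is_rel 2 (bislice_alg A i j) Q"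
  shows "pair_slice i j (put_slice i j R Q) = Q"
proof -
  have "pair_slice i j (put_slice i j R Q) = [Q ! 0, Q ! Suc 0]"
    using assms(1) ij by (simp add: pair_slice_def nth_put_slice)
  also have "\<dots> = Q"
    using assms(2) by (simp add: is_rel_bislice_iff length_2_eq[symmetric])
  finally show ?thesis .
qed

lemma rel_network_pair_slice:
  assumes "rel_network E N"
  shows "slice.rel_network E (\<lambda>a b. pair_slice i j (N a b))"
  unfolding slice.rel_network_def
proof (intro ballI impI conjI)
  fix a b
  assume ab: "a \<in> E" "b \<in> E" "a \<noteq> b"
  show "is_rel 2 (bislice_alg A i j) (pair_slice i j (N a b))"
    by (rule is_rel_pair_slice[OF rel_network_is_rel[OF assms ab]])
  show "pair_slice i j (N b a) = rconv 2 (bislice_alg A i j) (pair_slice i j (N a b))"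
    unfolding rel_network_sym[OF assms ab] by (rule pair_slice_rconv)
qed

context
  fixes E T N
  assumes E: "finite E" and N: "rel_network E N"
    and T: "\<And>a b. a \<in> E \<Longrightarrow> b \<in> E \<Longrightarrow> a \<noteq> b \<Longrightarrow> T a b = pair_slice i j (N a b)"
begin

lemma rel_network_slice: "slice.rel_network E T"
  using rel_network_pair_slice[OF N] T by (rule slice.rel_network_cong)

lemma pair_slice_comp_closure_le:
  "slice.net_le E (\<lambda>x y. pair_slice i j (comp_closure m A E N x y)) (comp_closure 2 (bislice_alg A i j) E T)"
proof (rule slice.comp_closure(4)[OF E rel_network_slice])
  note c = comp_closure[OF E N]
  show "slice.rel_labels E (\<lambda>x y. pair_slice i j (comp_closure m A E N x y))"
    using is_rel_pair_slice[OF rel_network_is_rel[OF c(1)]] by (simp add: slice.rel_labels_def)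
  show "comp_closed 2 (bislice_alg A i j) E (\<lambda>x y. pair_slice i j (comp_closure m A E N x y))"
    unfolding comp_closed_def pair_slice_rcomp[symmetric]
    using rle_pair_slice[OF comp_closedD[OF c(3)]] by blast
  show "slice.net_le E (\<lambda>x y. pair_slice i j (comp_closure m A E N x y)) T"
    unfolding slice.net_le_def using rle_pair_slice[OF net_leD[OF c(2)]] T by simp
qed

lemma put_slice_comp_closure_le:
  "net_le E (\<lambda>x y. put_slice i j (comp_closure m A E N x y) (comp_closure 2 (bislice_alg A i j) E T x y))
    (comp_closure m A E N)"
proof -
  define c where "c = comp_closure m A E N"
  define T' where "T' = comp_closure 2 (bislice_alg A i j) E T"
  note c = comp_closure[OF E N, folded c_def] and T' = slice.comp_closure[OF E rel_network_slice, folded T'_def]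
  note c_rel = rel_network_is_rel[OF c(1)] and T'_rel = slice.rel_network_is_rel[OF T'(1)]
  have "net_le E (\<lambda>x y. put_slice i j (c x y) (T' x y)) c"
  proof (rule c(4))
    show "rel_labels E (\<lambda>x y. put_slice i j (c x y) (T' x y))"
      using is_rel_put_slice[OF c_rel T'_rel] by (simp add: rel_labels_def)
    show "comp_closed m A E (\<lambda>x y. put_slice i j (c x y) (T' x y))"
      unfolding comp_closed_def
      using rle_put_slice[OF c_rel _ comp_closedD[OF c(3)] slice.comp_closedD[OF T'(3)]]
        rcomp_put_slice[OF c_rel c_rel T'_rel T'_rel] c_rel T'_rel
      by simp
    show "net_le E (\<lambda>x y. put_slice i j (c x y) (T' x y)) N"
      unfolding net_le_def
    proof (intro ballI impI)
      fix x y
      assume xy: "x \<in> E" "y \<in> E" "x \<noteq> y"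
      have "rle 2 (bislice_alg A i j) (T' x y) (pair_slice i j (N x y))"
        using slice.net_leD[OF T'(2) xy] T[OF xy] by simp
      then have "rle m A (put_slice i j (c x y) (T' x y)) (put_slice i j (N x y) (pair_slice i j (N x y)))"
        by (rule rle_put_slice[OF c_rel[OF xy] rel_network_is_rel[OF N xy] net_leD[OF c(2) xy]])
      then show "rle m A (put_slice i j (c x y) (T' x y)) (N x y)"
        by (simp add: put_slice_pair_slice[OF rel_network_is_rel[OF N xy]])
    qed
  qed
  then show ?thesis
    by (simp add: c_def T'_def)
qed

lemma comp_closure_bislice:
  assumes ab: "a \<in> E" "b \<in> E" "a \<noteq> b"
  shows "comp_closure 2 (bislice_alg A i j) E T a b = pair_slice i j (comp_closure m A E N a b)"
proof -
  define c where "c = comp_closure m A E N"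
  define T' where "T' = comp_closure 2 (bislice_alg A i j) E T"
  have c_rel: "is_rel m A (c a b)" and T'_rel: "is_rel 2 (bislice_alg A i j) (T' a b)"
    using rel_network_is_rel[OF comp_closure(1)[OF E N] ab]
      slice.rel_network_is_rel[OF slice.comp_closure(1)[OF E rel_network_slice] ab]
    by (simp_all add: c_def T'_def)
  have up: "rle 2 (bislice_alg A i j) (pair_slice i j (c a b)) (T' a b)"
    using slice.net_leD[OF pair_slice_comp_closure_le ab] by (simp add: c_def T'_def)
  have "rle 2 (bislice_alg A i j) (pair_slice i j (put_slice i j (c a b) (T' a b))) (pair_slice i j (c a b))"
    using rle_pair_slice[OF net_leD[OF put_slice_comp_closure_le ab]] by (simp add: c_def T'_def)
  then have down: "rle 2 (bislice_alg A i j) (T' a b) (pair_slice i j (c a b))"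
    by (simp add: pair_slice_put_slice[OF c_rel T'_rel])
  show ?thesis
    using slice.rle_antisym[OF T'_rel is_rel_pair_slice[OF c_rel] down up] by (simp add: T'_def c_def)
qed

end

lemma network_over_pair_slice:
  assumes "finite E" "rel_network E M" "\<And>x y. x \<in> E \<Longrightarrow> y \<in> E \<Longrightarrow> x \<noteq> y \<Longrightarrow> M x y \<in> S"
  shows "network_over 2 (bislice_alg A i j) (bislice_set S i j) E (\<lambda>x y. pair_slice i j (M x y))"
proof (rule slice.network_overI[OF assms(1) rel_network_pair_slice[OF assms(2)]])
  fix x y
  assume "x \<in> E" "y \<in> E" "x \<noteq> y"
  then show "pair_slice i j (M x y) \<in> bislice_set S i j"
    using assms(3) by (simp add: bislice_set_eq)
qed

lemma triv_inconsistent_pair_slice: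
  assumes "\<And>x y. x \<in> E \<Longrightarrow> y \<in> E \<Longrightarrow> x \<noteq> y \<Longrightarrow> T x y = pair_slice i j (N x y)"
    and "triv_inconsistent 2 (bislice_alg A i j) E T"
  shows "triv_inconsistent m A E N"
proof -
  obtain x y where xy: "x \<in> E" "y \<in> E" "x \<noteq> y"
    and "T x y ! 0 = bot (A i) \<or> T x y ! Suc 0 = bot (A j)"
    using assms(2) unfolding triv_inconsistent_bislice_iff by blast
  then have "\<exists>k<m. N x y ! k = bot (A k)"
    using assms(1)[OF xy] ij by auto
  then show ?thesis
    using xy unfolding triv_inconsistent_def by blast
qed

end

end

context multi_alg
begin

lemma proj_closure_pair_slice:
  assumes ij: "i < m" "j < m" "i \<noteq> j" and R: "is_rel m A R" "proj_closed m A P R"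
  shows "proj_closure 2 (bislice_alg A i j) (bislice_proj P i j) (pair_slice i j R) = pair_slice i j R"
proof (rule multi_alg.proj_closure_id)
  show "multi_alg 2 (bislice_alg A i j) (bislice_proj P i j)"
    using bislice_multi_algebra[OF multi_algebra ij] by unfold_locales
  show "is_rel 2 (bislice_alg A i j) (pair_slice i j R)"
    by (rule is_rel_pair_slice[OF ij R(1)])
  show "proj_closed 2 (bislice_alg A i j) (bislice_proj P i j) (pair_slice i j R)"
    unfolding proj_closed_bislice_iff
    using proj_closedD[OF R(2) ij] proj_closedD[OF R(2) ij(2,1) ij(3)[symmetric]] by simp
qed

end

section \<open>Dissociability\<close>

locale dissociation_setting = multi_alg +
  fixes S :: "'a list set"
  assumes S_rel: "S \<subseteq> {R. is_rel m A R}"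
    and S_proj_closed: "proj_closed_set m A P S"
    and S_comp_meet_closed: "comp_meet_closed_set m A S"
    and bislice_triangles_dissociable:
      "\<And>i j E N. i < m \<Longrightarrow> j < m \<Longrightarrow> i \<noteq> j \<Longrightarrow> card E = 3 \<Longrightarrow>
        network_over 2 (bislice_alg A i j) (bislice_set S i j) E N \<Longrightarrow>
        dissociable_net 2 (bislice_alg A i j) (bislice_proj P i j) E N"
begin

lemma network_over_rel_network: "network_over m A S E N \<Longrightarrow> rel_network E N"
  unfolding network_over_def rel_network_def using S_rel by blast

lemma network_overD: "network_over m A S E N \<Longrightarrow> x \<in> E \<Longrightarrow> y \<in> E \<Longrightarrow> x \<noteq> y \<Longrightarrow> N x y \<in> S"
  unfolding network_over_def by blast

lemma network_over_finite: "network_over m A S E N \<Longrightarrow> finite E"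
  unfolding network_over_def by blast

lemma network_over_set_edge:
  assumes M: "network_over m A S E M" and xz: "x \<in> E" "z \<in> E" "x \<noteq> z"
    and r: "r \<in> S" "rconv m A r \<in> S"
  shows "network_over m A S E (set_edge x z r M)"
proof -
  have "rel_network E (set_edge x z r M)"
    using network_over_rel_network[OF M] xz S_rel r(1) by (blast intro: rel_network_set_edge)
  moreover have "\<forall>a\<in>E. \<forall>b\<in>E. a \<noteq> b \<longrightarrow> set_edge x z r M a b \<in> S"
    using xz(3) r network_overD[OF M] by (rule set_edge_all[where Q = "\<lambda>_ _ v. v \<in> S"])
  ultimately show ?thesis
    using network_over_finite[OF M] unfolding network_over_def by (blast intro: rel_network_sym)
qed

lemma comp_closure_proj_closed_three_variables:
  assumes "card E = 3" and M: "network_over m A S E M" "net_proj_closed m A P E M"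
  shows "net_proj_closed m A P E (comp_closure m A E M) \<or> triv_inconsistent m A E (comp_closure m A E M)"
proof (rule disjCI)
  define c where "c = comp_closure m A E M"
  assume consistent: "\<not> triv_inconsistent m A E c"
  note E = network_over_finite[OF M(1)] and M_net = network_over_rel_network[OF M(1)]
  show "net_proj_closed m A P E c"
    unfolding net_proj_closed_def proj_closed_def
  proof (intro ballI impI allI)
    fix a b i j
    assume ab: "a \<in> E" "b \<in> E" "a \<noteq> b" and ij: "i < m" "j < m" "i \<noteq> j"
    define T' where "T' = comp_closure 2 (bislice_alg A i j) E
      (\<lambda>x y. proj_closure 2 (bislice_alg A i j) (bislice_proj P i j) (pair_slice i j (M x y)))"
    have T'_slice: "T' x y = pair_slice i j (c x y)" if "x \<in> E" "y \<in> E" "x \<noteq> y" for x y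
      unfolding T'_def c_def
      using rel_network_is_rel[OF M_net] net_proj_closedD[OF M(2)]
      by (intro comp_closure_bislice[OF ij E M_net _ that]) (simp add: proj_closure_pair_slice[OF ij])
    have "dissociable_net 2 (bislice_alg A i j) (bislice_proj P i j) E (\<lambda>x y. pair_slice i j (M x y))"
      by (rule bislice_triangles_dissociable[OF ij \<open>card E = 3\<close>
            network_over_pair_slice[OF ij E M_net network_overD[OF M(1)]]])
    moreover have "\<not> triv_inconsistent 2 (bislice_alg A i j) E T'"
      by (rule contrapos_nn[OF consistent triv_inconsistent_pair_slice[OF ij T'_slice]])
    ultimately have "alg_consistent 2 (bislice_alg A i j) (bislice_proj P i j) E T'"
      unfolding dissociable_net_def Let_def T'_def by blast
    then have "proj_closed 2 (bislice_alg A i j) (bislice_proj P i j) (T' a b)"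
      unfolding alg_consistent_def using net_proj_closedD[OF _ ab] by blast
    then show "le (A j) (c a b ! j) (P i j (c a b ! i))"
      by (simp add: T'_slice[OF ab] proj_closed_bislice_iff)
  qed
qed

definition triangle_refinement :: "(nat \<Rightarrow> nat \<Rightarrow> 'a list) \<Rightarrow> nat \<Rightarrow> nat \<Rightarrow> nat \<Rightarrow> 'a list" where
  "triangle_refinement M x y z = proj_closure m A P (rmeet m A (rcomp m A (M x y) (M y z)) (M x z))"

context
  fixes E M x y z
  assumes M: "network_over m A S E M"
    and xyz: "x \<in> E" "y \<in> E" "z \<in> E" "x \<noteq> y" "y \<noteq> z" "x \<noteq> z"
begin

lemma triangle_refinement_props:
  "is_rel m A (triangle_refinement M x y z)" "proj_closed m A P (triangle_refinement M x y z)"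
  "triangle_refinement M x y z \<in> S" "rle m A (triangle_refinement M x y z) (M x z)"
proof -
  note M_rel = rel_network_is_rel[OF network_over_rel_network[OF M]]
  define s where "s = rmeet m A (rcomp m A (M x y) (M y z)) (M x z)"
  have s: "is_rel m A s" "s \<in> S" "rle m A s (M x z)"
    using S_comp_meet_closed network_overD[OF M] xyz M_rel
    by (simp_all add: s_def comp_meet_closed_set_def rmeet_le2)
  then show "is_rel m A (triangle_refinement M x y z)" "proj_closed m A P (triangle_refinement M x y z)"
    "triangle_refinement M x y z \<in> S"
    using S_proj_closed by (simp_all add: triangle_refinement_def proj_closure proj_closed_set_def flip: s_def)
  show "rle m A (triangle_refinement M x y z) (M x z)"
    using rle_trans[OF proj_closure(1)[OF s(1)] s(1) M_rel[OF xyz(1,3,6)] proj_closure(2)[OF s(1)] s(3)]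
    by (simp add: triangle_refinement_def s_def)
qed

lemma triangle_refinement_rconv: "rconv m A (triangle_refinement M x y z) = triangle_refinement M z y x"
  using xyz rel_network_is_rel[OF network_over_rel_network[OF M]]
    rel_network_sym[OF network_over_rel_network[OF M], of x y]
    rel_network_sym[OF network_over_rel_network[OF M], of y z]
    rel_network_sym[OF network_over_rel_network[OF M], of x z]
  by (simp add: triangle_refinement_def rconv_rmeet rconv_rcomp flip: proj_closure_rconv)

lemma triangle_refinement_eq_imp_le_rcomp:
  assumes "triangle_refinement M x y z = M x z"
  shows "rle m A (M x z) (rcomp m A (M x y) (M y z))"
proof -
  note M_rel = rel_network_is_rel[OF network_over_rel_network[OF M]]
  have rels: "is_rel m A (rcomp m A (M x y) (M y z))" "is_rel m A (M x z)"
    using xyz M_rel by simp_all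
  have "rle m A (triangle_refinement M x y z) (rmeet m A (rcomp m A (M x y) (M y z)) (M x z))"
    using rels by (simp add: triangle_refinement_def proj_closure)
  then show ?thesis
    using rle_trans[OF triangle_refinement_props(1) is_rel_rmeet[OF rels] rels(1) _ rmeet_le1[OF rels]] assms
    by simp
qed

lemma rle_triangle_refinement:
  assumes "proj_closed m A P (c x z)" and c: "rel_labels T c" "comp_closed m A T c" "net_le T c M"
    and T: "x \<in> T" "y \<in> T" "z \<in> T"
  shows "rle m A (c x z) (triangle_refinement M x y z)"
proof -
  note xy = T(1,2) xyz(4) and yz = T(2,3) xyz(5) and xz = T(1,3) xyz(6)
  have M_rels: "is_rel m A (M x y)" "is_rel m A (M y z)" "is_rel m A (M x z)"
    using rel_network_is_rel[OF network_over_rel_network[OF M]] xyz by simp_all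
  have c_rels: "is_rel m A (c x y)" "is_rel m A (c y z)" "is_rel m A (c x z)"
    using rel_labelsD[OF c(1) xy] rel_labelsD[OF c(1) yz] rel_labelsD[OF c(1) xz] .
  have "rle m A (rcomp m A (c x y) (c y z)) (rcomp m A (M x y) (M y z))"
    by (rule rcomp_mono[OF M_rels(1,2) c_rels(1,2) net_leD[OF c(3) xy] net_leD[OF c(3) yz]])
  then have "rle m A (c x z) (rcomp m A (M x y) (M y z))"
    by (rule rle_trans[OF c_rels(3) is_rel_rcomp[OF c_rels(1,2)] is_rel_rcomp[OF M_rels(1,2)]
          comp_closedD[OF c(2) T xyz(4-6)]])
  then have "rle m A (c x z) (rmeet m A (rcomp m A (M x y) (M y z)) (M x z))"
    by (rule rle_rmeetI[OF is_rel_rcomp[OF M_rels(1,2)] M_rels(3) c_rels(3) _ net_leD[OF c(3) xz]])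
  then show ?thesis
    unfolding triangle_refinement_def using assms(1) c_rels(3) M_rels by (intro proj_closure(4)) simp_all
qed

end

lemma le_triangle_refinement:
  assumes M: "network_over m A S E M" "net_proj_closed m A P E M"
    and K: "rel_labels E K" "comp_closed m A E K" "\<not> triv_inconsistent m A E K" "net_le E K M"
    and xyz: "x \<in> E" "y \<in> E" "z \<in> E" "x \<noteq> y" "y \<noteq> z" "x \<noteq> z"
  shows "rle m A (K x z) (triangle_refinement M x y z)"
proof -
  define T where "T = {x, y, z}"
  define c where "c = comp_closure m A T M"
  have T: "card T = 3" "finite T" "T \<subseteq> E" "x \<in> T" "y \<in> T" "z \<in> T"
    using xyz by (auto simp: T_def)
  have M_T: "network_over m A S T M" "net_proj_closed m A P T M"
    using network_over_subset[OF M(1) T(3)] net_proj_closed_subset[OF M(2) T(3)] .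
  note c = comp_closure[OF T(2) network_over_rel_network[OF M_T(1)], folded c_def]
  note K_T = rel_labels_subset[OF K(1) T(3)] comp_closed_subset[OF K(2) T(3)] net_le_subset[OF K(4) T(3)]
  have K_c: "net_le T K c"
    using K_T by (rule c(4))
  have "\<not> triv_inconsistent m A T c"
    using triv_inconsistent_net_le[OF K_T(1) K_c] triv_inconsistent_mono[OF _ T(3)] K(3) by blast
  then have "net_proj_closed m A P T c"
    using comp_closure_proj_closed_three_variables[OF T(1) M_T] by (simp add: c_def)
  then have "proj_closed m A P (c x z)"
    by (rule net_proj_closedD[OF _ T(4,6) xyz(6)])
  then have "rle m A (c x z) (triangle_refinement M x y z)"
    using rel_network_rel_labels[OF c(1)] c(3,2) T(4-6) by (rule rle_triangle_refinement[OF M(1) xyz])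
  then show ?thesis
    by (rule rle_trans[OF rel_labelsD[OF K(1) xyz(1,3,6)] rel_network_is_rel[OF c(1) T(4,6) xyz(6)]
          triangle_refinement_props(1)[OF M(1) xyz] net_leD[OF K_c T(4,6) xyz(6)]])
qed

lemma refine_triangle:
  assumes M: "network_over m A S E M" "net_proj_closed m A P E M"
    and K: "rel_labels E K" "comp_closed m A E K" "\<not> triv_inconsistent m A E K" "net_le E K M"
    and "\<not> comp_closed m A E M"
  obtains M' where "network_over m A S E M'" "net_proj_closed m A P E M'" "net_le E K M'"
    "refines E M' M" "M' \<noteq> M"
proof -
  obtain x y z where xyz: "x \<in> E" "y \<in> E" "z \<in> E" "x \<noteq> y" "y \<noteq> z" "x \<noteq> z"
    and not_closed: "\<not> rle m A (M x z) (rcomp m A (M x y) (M y z))"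
    using \<open>\<not> comp_closed m A E M\<close> unfolding comp_closed_def by blast
  note zyx = xyz(3,2,1) xyz(5,4,6)[symmetric]
  note M_net = network_over_rel_network[OF M(1)]
  define q where "q = triangle_refinement M x y z"
  note q = triangle_refinement_props[OF M(1) xyz, folded q_def]
  note rconv_q = triangle_refinement_rconv[OF M(1) xyz, folded q_def]
  note rconv_q_props = triangle_refinement_props[OF M(1) zyx, folded rconv_q]
  define M' where "M' = set_edge x z q M"
  show thesis
  proof (rule that[of M'])
    show "network_over m A S E M'"
      unfolding M'_def using M(1) xyz(1,3,6) q(3) rconv_q_props(3) by (rule network_over_set_edge)
    show "net_proj_closed m A P E M'"
      unfolding M'_def using M(2) xyz(6) q(2) rconv_q_props(2) by (rule net_proj_closed_set_edge)
    show "net_le E K M'"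
      unfolding net_le_def M'_def
      using xyz(6) le_triangle_refinement[OF M K xyz, folded q_def]
        le_triangle_refinement[OF M K zyx, folded rconv_q] net_leD[OF K(4)]
      by (rule set_edge_all[where Q = "\<lambda>a b. rle m A (K a b)"])
    have "net_le E M' M"
      unfolding net_le_def M'_def using xyz(6) q(4) rconv_q_props(4) rle_refl[OF rel_network_is_rel[OF M_net]]
      by (rule set_edge_all[where Q = "\<lambda>a b v. rle m A v (M a b)"])
    then show "refines E M' M"
      unfolding refines_def M'_def using agree_off_set_edge[OF xyz(1,3,6)] by simp
    show "M' \<noteq> M"
      using triangle_refinement_eq_imp_le_rcomp[OF M(1) xyz] not_closed set_edge_xz[OF xyz(6)]
      unfolding M'_def q_def by metis
  qed
qed

lemma comp_closed_refinement:
  assumes E: "finite E" and M0: "network_over m A S E M0" "net_proj_closed m A P E M0"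
    and K: "rel_labels E K" "comp_closed m A E K" "\<not> triv_inconsistent m A E K" "net_le E K M0"
  shows "\<exists>M. network_over m A S E M \<and> net_proj_closed m A P E M \<and> comp_closed m A E M \<and>
    net_le E K M \<and> net_le E M M0"
  using M0 K(4)
proof (induction "nsize E M0" arbitrary: M0 rule: less_induct)
  case less
  note M0_labels = rel_network_rel_labels[OF network_over_rel_network[OF less.prems(1)]]
  show ?case
  proof (cases "comp_closed m A E M0")
    case True
    then show ?thesis
      using less.prems net_le_refl[OF M0_labels] by blast
  next
    case False
    then obtain M' where M': "network_over m A S E M'" "net_proj_closed m A P E M'" "net_le E K M'"
      "refines E M' M0" "M' \<noteq> M0"
      using refine_triangle[OF less.prems(1,2) K(1-3) less.prems(3)] by blast
    have "nsize E M' < nsize E M0"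
      using nsize_less[OF E network_over_rel_network[OF M'(1)] network_over_rel_network[OF less.prems(1)] M'(4,5)] .
    then obtain M where M: "network_over m A S E M" "net_proj_closed m A P E M" "comp_closed m A E M"
      "net_le E K M" "net_le E M M'"
      using less.hyps M'(1-3) by blast
    have "net_le E M M0"
      using M(5) M'(4) net_le_trans[OF rel_network_rel_labels[OF network_over_rel_network[OF M(1)]]
          rel_network_rel_labels[OF network_over_rel_network[OF M'(1)]] M0_labels]
      by (simp add: refines_def)
    then show ?thesis
      using M by blast
  qed
qed

lemma network_over_proj_closure:
  assumes N: "network_over m A S E N"
  shows "network_over m A S E (\<lambda>x y. proj_closure m A P (N x y))"
    and "net_proj_closed m A P E (\<lambda>x y. proj_closure m A P (N x y))"
proof -
  note N_net = network_over_rel_network[OF N]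
  have "rel_network E (\<lambda>x y. proj_closure m A P (N x y))"
    unfolding rel_network_def
  proof (intro ballI impI conjI)
    fix x y
    assume xy: "x \<in> E" "y \<in> E" "x \<noteq> y"
    show "is_rel m A (proj_closure m A P (N x y))"
      using proj_closure(1)[OF rel_network_is_rel[OF N_net xy]] .
    show "proj_closure m A P (N y x) = rconv m A (proj_closure m A P (N x y))"
      using proj_closure_rconv[OF rel_network_is_rel[OF N_net xy]] rel_network_sym[OF N_net xy] by simp
  qed
  then show "network_over m A S E (\<lambda>x y. proj_closure m A P (N x y))"
    using network_over_finite[OF N] S_proj_closed network_overD[OF N]
    by (intro network_overI) (auto simp: proj_closed_set_def)
  show "net_proj_closed m A P E (\<lambda>x y. proj_closure m A P (N x y))"
    using proj_closure(3)[OF rel_network_is_rel[OF N_net]] by (simp add: net_proj_closed_def)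
qed

lemma dissociable: "dissociable_set m A P S"
  unfolding dissociable_set_def
proof (intro allI impI)
  fix E N
  assume N: "network_over m A S E N"
  define N1 where "N1 = (\<lambda>x y. proj_closure m A P (N x y))"
  define N' where "N' = comp_closure m A E N1"
  note E = network_over_finite[OF N]
  note N1 = network_over_proj_closure[OF N, folded N1_def]
  note closure = comp_closure[OF E network_over_rel_network[OF N1(1)], folded N'_def]
  have "alg_consistent m A P E N' \<or> triv_inconsistent m A E N'"
  proof (rule disjCI)
    assume consistent: "\<not> triv_inconsistent m A E N'"
    obtain M where M: "network_over m A S E M" "net_proj_closed m A P E M" "comp_closed m A E M"
      "net_le E N' M" "net_le E M N1"
      using comp_closed_refinement[OF E N1 rel_network_rel_labels[OF closure(1)] closure(3) consistent closure(2)]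
      by blast
    note M_labels = rel_network_rel_labels[OF network_over_rel_network[OF M(1)]]
    have "net_le E M N'"
      using M_labels M(3,5) by (rule closure(4))
    then have "N' x y = M x y" if "x \<in> E" "y \<in> E" "x \<noteq> y" for x y
      using net_le_antisym[OF rel_network_rel_labels[OF closure(1)] M_labels M(4) _ that] by blast
    then have "net_proj_closed m A P E N'"
      using M(2) unfolding net_proj_closed_def by simp
    then show "alg_consistent m A P E N'"
      using closure(3) consistent by (simp add: alg_consistent_def)
  qed
  then show "dissociable_net m A P E N"
    unfolding dissociable_net_def Let_def N'_def N1_def .
qed

end

theorem proposition6p6:
  fixes m :: nat and A :: "nat \<Rightarrow> 'a nalg" and P :: "nat \<Rightarrow> nat \<Rightarrow> 'a \<Rightarrow> 'a"
    and S :: "'a list set"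
  assumes "multi_algebra m A P"
    and "S \<subseteq> {R. is_rel m A R}"
    and "proj_closed_set m A P S"
    and "comp_meet_closed_set m A S"
    and "\<forall>i<m. \<forall>j<m. i \<noteq> j \<longrightarrow>
           (\<forall>E N. card E = 3 \<and>
              network_over 2 (bislice_alg A i j) (bislice_set S i j) E N \<longrightarrow>
              dissociable_net 2 (bislice_alg A i j) (bislice_proj P i j) E N)"
  shows "dissociable_set m A P S"
proof -
  interpret dissociation_setting m A P S
    using assms by unfold_locales blast+
  show ?thesis
    by (rule dissociable)
qed

end
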